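(* Let $k_0\ge1$, $(\pi^0,P^0)\in\Theta^{k_0}$, and for each $n$ let $\mathbf x_{n\times n}$ be the network part of a sample of size $n$ from the SBM with parameters $(\pi^0,P^0)$, this SBM having order $k_0$. Then $\hat k_{\mathrm{KT}}(\mathbf x_{n\times n})\notin(\log n,n]$ eventually almost surely as $n\to\infty$.
   Context: An adjacency matrix on $n$ nodes is a symmetric $\mathbf{x}\in\{0,1\}^{n\times n}$ with zero diagonal. For $k\ge1$ let $\Theta^k=\{(\pi,P):\pi\in(0,1]^k,\ \sum_{a=1}^k\pi_a=1,\ P\in[0,1]^{k\times k}\text{ symmetric}\}$, $[k]=\{1,\dots,k\}$. For $(\pi,P)\in\Theta^k$ the SBM is the law of $(\mathbf Z_n,\mathbf X_{n\times n})$, $\mathbf Z_n\in[k]^n$, with $\mathbb P_{\pi,P}(\mathbf z_n,\mathbf x)=\prod_{a=1}^k\pi_a^{n_a}\prod_{a,b=1}^kP_{a,b}^{O_{a,b}/2}(1-P_{a,b})^{(n_{a,b}-O_{a,b})/2}$ ($0^0=1$), $n_a=\sum_i 1\{z_i=a\}$, $n_{a,b}=n_an_b$ ($a\ne b$), $n_{a,a}=n_a(n_a-1)$, $O_{a,b}=\sum_{i,j}1\{z_i=a,z_j=b\}x_{ij}$; $\mathbb P_{\pi,P}(\mathbf x)=\sum_{\mathbf z_n\in[k]^n}\mathbb P_{\pi,P}(\mathbf z_n,\mathbf x)$. The order of an SBM is the smallest $k$ for which its law can be written in this form with parameters in $\Theta^k$. KT prior: $\nu_k(\pi,P)=\Big[\frac{\Gamma(k/2)}{\Gamma(1/2)^k}\prod_{a}\pi_a^{-1/2}\Big]\Big[\prod_{1\le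 a\le b\le k}\frac{1}{\Gamma(1/2)^2}P_{a,b}^{-1/2}(1-P_{a,b})^{-1/2}\Big]$; $\mathrm{KT}_k(\mathbf x)=\int_{\Theta^k}\mathbb P_{\pi,P}(\mathbf x)\nu_k(\pi,P)\,d\pi\,dP$. Estimator: $\hat k_{\mathrm{KT}}(\mathbf x)=\arg\max_{k\ge1}\{\log\mathrm{KT}_k(\mathbf x)-\mathrm{pen}(k,n)\}$, $\mathrm{pen}(k,n)=\sum_{i=1}^{k-1}\frac{i(i+2)+3+\epsilon}{2}\log n$ for fixed $\epsilon>0$. "Eventually almost surely" means: with probability one, for all sufficiently large $n$. *)

theory Defs
  imports "HOL-Probability.Probability"
begin

text \<open>Labels are natural numbers in the set {1..k}; nodes are 0..n-1.
  An adjacency matrix on n nodes is x :: nat => nat => bool, read on i,j < n.\<close>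

definition adj_matrix :: "nat \<Rightarrow> (nat \<Rightarrow> nat \<Rightarrow> bool) \<Rightarrow> bool" where
  "adj_matrix n x \<longleftrightarrow> (\<forall>i<n. \<forall>j<n. x i j = x j i) \<and> (\<forall>i<n. \<not> x i i)"

definition pow0 :: "real \<Rightarrow> real \<Rightarrow> real" where
  "pow0 b e = (if e = 0 then 1 else b powr e)"

definition Theta :: "nat \<Rightarrow> ((nat \<Rightarrow> real) \<times> (nat \<Rightarrow> nat \<Rightarrow> real)) set" where
  "Theta k = {(\<pi>, P). (\<forall>a\<in>{1..k}. 0 < \<pi> a \<and> \<pi> a \<le> 1) \<and> (\<Sum>a=1..k. \<pi> a) = 1 \<and>
      (\<forall>a\<in>{1..k}. \<forall>b\<in>{1..k}. 0 \<le> P a b \<and> P a b \<le> 1 \<and> P a b = P b a)}"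

definition n_cnt :: "nat \<Rightarrow> (nat \<Rightarrow> nat) \<Rightarrow> nat \<Rightarrow> nat" where
  "n_cnt n z a = card {i. i < n \<and> z i = a}"

definition n_pair :: "nat \<Rightarrow> (nat \<Rightarrow> nat) \<Rightarrow> nat \<Rightarrow> nat \<Rightarrow> nat" where
  "n_pair n z a b = (if a \<noteq> b then n_cnt n z a * n_cnt n z b
                     else n_cnt n z a * (n_cnt n z a - 1))"

definition O_cnt :: "nat \<Rightarrow> (nat \<Rightarrow> nat) \<Rightarrow> (nat \<Rightarrow> nat \<Rightarrow> bool) \<Rightarrow> nat \<Rightarrow> nat \<Rightarrow> nat" where
  "O_cnt n z x a b = card {(i, j). i < n \<and> j < n \<and> z i = a \<and> z j = b \<and> x i j}"

definition sbm_joint :: "nat \<Rightarrow> (nat \<Rightarrow> real) \<Rightarrow> (nat \<Rightarrow> nat \<Rightarrow> real) \<Rightarrow> nat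
    \<Rightarrow> (nat \<Rightarrow> nat) \<Rightarrow> (nat \<Rightarrow> nat \<Rightarrow> bool) \<Rightarrow> real" where
  "sbm_joint k \<pi> P n z x =
     (\<Prod>a\<in>{1..k}. \<pi> a ^ n_cnt n z a) *
     (\<Prod>a\<in>{1..k}. \<Prod>b\<in>{1..k}.
        pow0 (P a b) (real (O_cnt n z x a b) / 2) *
        pow0 (1 - P a b) ((real (n_pair n z a b) - real (O_cnt n z x a b)) / 2))"

definition labelings :: "nat \<Rightarrow> nat \<Rightarrow> (nat \<Rightarrow> nat) set" where
  "labelings k n = PiE {0..<n} (\<lambda>_. {1..k})"

definition sbm_marg :: "nat \<Rightarrow> (nat \<Rightarrow> real) \<Rightarrow> (nat \<Rightarrow> nat \<Rightarrow> real) \<Rightarrow> nat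
    \<Rightarrow> (nat \<Rightarrow> nat \<Rightarrow> bool) \<Rightarrow> real" where
  "sbm_marg k \<pi> P n x = (\<Sum>z\<in>labelings k n. sbm_joint k \<pi> P n z x)"

definition sbm_order :: "nat \<Rightarrow> (nat \<Rightarrow> real) \<Rightarrow> (nat \<Rightarrow> nat \<Rightarrow> real) \<Rightarrow> nat" where
  "sbm_order k \<pi> P = (LEAST k'. k' \<ge> 1 \<and> (\<exists>(\<pi>', P') \<in> Theta k'.
       \<forall>n x. adj_matrix n x \<longrightarrow> sbm_marg k' \<pi>' P' n x = sbm_marg k \<pi> P n x))"

definition kt_prior :: "nat \<Rightarrow> (nat \<Rightarrow> real) \<Rightarrow> (nat \<Rightarrow> nat \<Rightarrow> real) \<Rightarrow> real" where
  "kt_prior k \<pi> P =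
     (Gamma (real k / 2) / Gamma (1/2) ^ k * (\<Prod>a\<in>{1..k}. \<pi> a powr (-1/2))) *
     (\<Prod>(a, b)\<in>{(a, b). 1 \<le> a \<and> a \<le> b \<and> b \<le> k}.
        1 / Gamma (1/2) ^ 2 * P a b powr (-1/2) * (1 - P a b) powr (-1/2))"

text \<open>Coordinates of the integration: pi_1..pi_{k-1} free (pi_k = 1 - sum), and
  P_{a,b} for 1 <= a <= b <= k free (P symmetric).\<close>
definition pi_of :: "nat \<Rightarrow> (nat \<Rightarrow> real) \<Rightarrow> nat \<Rightarrow> real" where
  "pi_of k p a = (if a < k then p a else 1 - (\<Sum>c\<in>{1..<k}. p c))"

definition P_of :: "((nat \<times> nat) \<Rightarrow> real) \<Rightarrow> nat \<Rightarrow> nat \<Rightarrow> real" where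
  "P_of q a b = q (min a b, max a b)"

definition upper_idx :: "nat \<Rightarrow> (nat \<times> nat) set" where
  "upper_idx k = {(a, b). 1 \<le> a \<and> a \<le> b \<and> b \<le> k}"

definition KT :: "nat \<Rightarrow> nat \<Rightarrow> (nat \<Rightarrow> nat \<Rightarrow> bool) \<Rightarrow> real" where
  "KT k n x = enn2real
     (\<integral>\<^sup>+ p. \<integral>\<^sup>+ q.
        ennreal (indicator (Theta k) (pi_of k p, P_of q) *
                 sbm_marg k (pi_of k p) (P_of q) n x * kt_prior k (pi_of k p) (P_of q))
      \<partial>(PiM (upper_idx k) (\<lambda>_. lborel)) \<partial>(PiM {1..<k} (\<lambda>_. lborel)))"

definition pen :: "real \<Rightarrow> nat \<Rightarrow> nat \<Rightarrow> real" where
  "pen \<epsilon> k n = (\<Sum>i=1..<k. (real (i * (i + 2)) + 3 + \<epsilon>) / 2 * ln (real n))"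

definition kt_score :: "real \<Rightarrow> nat \<Rightarrow> (nat \<Rightarrow> nat \<Rightarrow> bool) \<Rightarrow> nat \<Rightarrow> real" where
  "kt_score \<epsilon> n x k = ln (KT k n x) - pen \<epsilon> k n"

definition k_KT :: "real \<Rightarrow> nat \<Rightarrow> (nat \<Rightarrow> nat \<Rightarrow> bool) \<Rightarrow> nat" where
  "k_KT \<epsilon> n x = (LEAST k. 1 \<le> k \<and> (\<forall>k'\<ge>1. kt_score \<epsilon> n x k' \<le> kt_score \<epsilon> n x k))"

end

theory Submission
  imports Defs
begin

(* Call a graph on n nodes typical if the true model gives it positive probability and no
   order k <= n has KT mixture above n^3 B_k times its true probability, where B_k bounds the
   total mass of the KT prior of order k.  Summing KT_k over all graphs gives at most B_k, so by
   Markov's inequality atypical graphs have probability at most n * n^-3; by Borel-Cantelli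
   almost every sample is eventually typical.  On a typical graph, KT_k0 is at least
   c n^-D times the true probability (integrate over a box of volume of order n^-D around the
   true parameters, on which likelihood and prior change by bounded factors), whereas KT_k is
   at most n^3 e^(3 + 2 k^2) times it.  For ln n < k <= n the penalty difference
   pen(k) - pen(k0) >= k^2 ln n / 2 outweighs this gain, so k is not the maximiser. *)

lemma pow0_nonneg: "b \<ge> 0 \<Longrightarrow> pow0 b e \<ge> 0"
  by (simp add: pow0_def)

lemma pow0_add: "b \<ge> 0 \<Longrightarrow> e1 \<ge> 0 \<Longrightarrow> e2 \<ge> 0 \<Longrightarrow> pow0 b (e1 + e2) = pow0 b e1 * pow0 b e2"
  by (auto simp: pow0_def powr_add)

lemma prod_pow0:
  "finite S \<Longrightarrow> b \<ge> 0 \<Longrightarrow> (\<And>s. s \<in> S \<Longrightarrow> e s \<ge> 0) \<Longrightarrow>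
   (\<Prod>s\<in>S. pow0 b (e s)) = pow0 b (\<Sum>s\<in>S. e s)"
proof (induction S rule: finite_induct)
  case empty
  then show ?case by (simp add: pow0_def)
next
  case (insert x F)
  then show ?case by (simp add: pow0_add sum_nonneg)
qed

lemma pow0_half_mult_self: "b \<ge> 0 \<Longrightarrow> pow0 b (1/2) * pow0 b (1/2) = b"
  using pow0_add[of b "1/2" "1/2"] by (simp add: pow0_def)

lemma pow0_mono: "0 \<le> a \<Longrightarrow> a \<le> b \<Longrightarrow> 0 \<le> e \<Longrightarrow> pow0 a e \<le> pow0 b e"
  by (auto simp: pow0_def intro: powr_mono2)

lemma pow0_mult: "0 \<le> a \<Longrightarrow> 0 \<le> b \<Longrightarrow> pow0 (a * b) e = pow0 a e * pow0 b e"
  by (auto simp: pow0_def powr_mult)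


section \<open>Graphs as edge configurations\<close>

definition upper_pairs :: "nat \<Rightarrow> (nat \<times> nat) set" where
  "upper_pairs n = {(i, j). i < j \<and> j < n}"

definition offdiag_pairs :: "nat \<Rightarrow> (nat \<times> nat) set" where
  "offdiag_pairs n = {(i, j). i < n \<and> j < n \<and> i \<noteq> j}"

definition graphs :: "nat \<Rightarrow> (nat \<times> nat \<Rightarrow> bool) set" where
  "graphs n = PiE (upper_pairs n) (\<lambda>_. UNIV)"

definition graph_of :: "(nat \<times> nat \<Rightarrow> bool) \<Rightarrow> nat \<Rightarrow> nat \<Rightarrow> bool" where
  "graph_of u i j = (if i < j then u (i, j) else if j < i then u (j, i) else False)"

definition edges_of :: "nat \<Rightarrow> (nat \<Rightarrow> nat \<Rightarrow> bool) \<Rightarrow> (nat \<times> nat \<Rightarrow> bool)" where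
  "edges_of n x = restrict (\<lambda>(i, j). x i j) (upper_pairs n)"

lemma finite_upper_pairs [simp]: "finite (upper_pairs n)"
  by (rule finite_subset[of _ "{..<n} \<times> {..<n}"]) (auto simp: upper_pairs_def)

lemma finite_offdiag_pairs [simp]: "finite (offdiag_pairs n)"
  by (rule finite_subset[of _ "{..<n} \<times> {..<n}"]) (auto simp: offdiag_pairs_def)

lemma finite_graphs [simp]: "finite (graphs n)"
  unfolding graphs_def by (intro finite_PiE) auto

lemma finite_labelings [simp]: "finite (labelings k n)"
  unfolding labelings_def by (intro finite_PiE) auto

lemma adj_matrix_graph_of: "adj_matrix n (graph_of u)"
  by (auto simp: adj_matrix_def graph_of_def)

lemma edges_of_in_graphs: "edges_of n x \<in> graphs n"
  by (simp add: edges_of_def graphs_def)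

lemma graph_of_edges_of:
  "adj_matrix n x \<Longrightarrow> i < n \<Longrightarrow> j < n \<Longrightarrow> graph_of (edges_of n x) i j = x i j"
  by (auto simp: adj_matrix_def graph_of_def edges_of_def upper_pairs_def)

lemma edges_of_graph_of:
  assumes "u \<in> graphs n"
  shows "edges_of n (graph_of u) = u"
proof
  fix p :: "nat \<times> nat"
  show "edges_of n (graph_of u) p = u p"
  proof (cases "p \<in> upper_pairs n")
    case True
    then show ?thesis by (cases p) (auto simp: edges_of_def graph_of_def upper_pairs_def)
  next
    case False
    then show ?thesis using PiE_arb[OF assms[unfolded graphs_def] False] by (simp add: edges_of_def)
  qed
qed

lemma graph_of_inj:
  assumes "u \<in> graphs n" "v \<in> graphs n" "\<forall>i<n. \<forall>j<n. graph_of u i j = graph_of v i j"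
  shows "u = v"
proof -
  have "edges_of n (graph_of u) = edges_of n (graph_of v)"
    unfolding edges_of_def using assms(3) by (intro restrict_ext) (auto simp: upper_pairs_def)
  then show ?thesis using assms(1,2) by (simp add: edges_of_graph_of)
qed

lemma prod_offdiag_pairs:
  "(\<Prod>p\<in>offdiag_pairs n. g p) = (\<Prod>p\<in>upper_pairs n. g p * g (snd p, fst p))"
proof -
  have "offdiag_pairs n = upper_pairs n \<union> (\<lambda>(i, j). (j, i)) ` upper_pairs n"
    by (auto simp: offdiag_pairs_def upper_pairs_def image_iff)
  moreover have "upper_pairs n \<inter> (\<lambda>(i, j). (j, i)) ` upper_pairs n = {}"
    by (auto simp: upper_pairs_def)
  moreover have "(\<Prod>p\<in>(\<lambda>(i, j). (j, i)) ` upper_pairs n. g p) = (\<Prod>p\<in>upper_pairs n. g (snd p, fst p))"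
    by (subst prod.reindex) (auto simp: inj_on_def case_prod_beta)
  ultimately show ?thesis
    by (simp add: prod.union_disjoint prod.distrib)
qed

lemma card_offdiag_pairs_labelled:
  "card {p \<in> offdiag_pairs n. (z (fst p), z (snd p)) = (a, b)} = n_pair n z a b"
proof -
  define A where "A c = {i. i < n \<and> z i = c}" for c
  have fin: "finite (A c)" for c by (auto simp: A_def)
  show ?thesis
  proof (cases "a = b")
    case False
    then have "{p \<in> offdiag_pairs n. (z (fst p), z (snd p)) = (a, b)} = A a \<times> A b"
      by (auto simp: offdiag_pairs_def A_def)
    then show ?thesis
      using False by (simp add: n_pair_def n_cnt_def A_def card_cartesian_product)
  next
    case True
    then have "{p \<in> offdiag_pairs n. (z (fst p), z (snd p)) = (a, b)} = A a \<times> A a - (\<lambda>i. (i, i)) ` A a"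
      by (auto simp: offdiag_pairs_def A_def)
    moreover have "card (A a \<times> A a - (\<lambda>i. (i, i)) ` A a) = card (A a) * card (A a) - card (A a)"
      using fin by (subst card_Diff_subset) (auto simp: card_image inj_on_def card_cartesian_product)
    ultimately show ?thesis
      using True by (simp add: n_pair_def n_cnt_def A_def diff_mult_distrib2)
  qed
qed

lemma O_cnt_graph_of:
  "O_cnt n z (graph_of u) a b =
     card {p \<in> offdiag_pairs n. (z (fst p), z (snd p)) = (a, b) \<and> graph_of u (fst p) (snd p)}"
  unfolding O_cnt_def
  by (rule arg_cong[where f = card]) (auto simp: offdiag_pairs_def graph_of_def split: if_splits)

lemma O_cnt_graph_of_le_n_pair: "O_cnt n z (graph_of u) a b \<le> n_pair n z a b"
  unfolding O_cnt_graph_of card_offdiag_pairs_labelled[symmetric] by (rule card_mono) auto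

lemma n_cnt_le: "n_cnt n z a \<le> n"
proof -
  have "n_cnt n z a \<le> card {..<n}" unfolding n_cnt_def by (rule card_mono) auto
  then show ?thesis by simp
qed

lemma n_pair_le: "n_pair n z a b \<le> n ^ 2"
proof -
  have "n_cnt n z a * n_cnt n z b \<le> n * n" using n_cnt_le by (intro mult_le_mono) auto
  moreover have "n_cnt n z a * (n_cnt n z a - 1) \<le> n * n"
    using n_cnt_le le_trans[OF diff_le_self n_cnt_le] by (intro mult_le_mono) auto
  ultimately show ?thesis by (auto simp: n_pair_def power2_eq_square)
qed

text \<open>\<open>sbm_joint\<close> counts ordered pairs with exponent 1/2: each orientation of an edge
  contributes the square root of its Bernoulli factor.\<close>

definition half_edge_factor ::
    "(nat \<Rightarrow> nat \<Rightarrow> real) \<Rightarrow> (nat \<Rightarrow> nat) \<Rightarrow> (nat \<Rightarrow> nat \<Rightarrow> bool) \<Rightarrow> nat \<times> nat \<Rightarrow> real" where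
  "half_edge_factor P z x p =
     pow0 (P (z (fst p)) (z (snd p))) (if x (fst p) (snd p) then 1/2 else 0) *
     pow0 (1 - P (z (fst p)) (z (snd p))) (if x (fst p) (snd p) then 0 else 1/2)"

lemma prod_half_edge_factor_block:
  assumes "0 \<le> P a b" "P a b \<le> 1"
  shows "(\<Prod>p\<in>{p \<in> offdiag_pairs n. (z (fst p), z (snd p)) = (a, b)}. half_edge_factor P z (graph_of u) p) =
    pow0 (P a b) (real (O_cnt n z (graph_of u) a b) / 2) *
    pow0 (1 - P a b) ((real (n_pair n z a b) - real (O_cnt n z (graph_of u) a b)) / 2)"
proof -
  define S where "S = {p \<in> offdiag_pairs n. (z (fst p), z (snd p)) = (a, b)}"
  define E where "E = {p \<in> S. graph_of u (fst p) (snd p)}"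
  have fin: "finite S" by (simp add: S_def)
  have card_E: "card E = O_cnt n z (graph_of u) a b"
    by (simp add: O_cnt_graph_of E_def S_def)
  have card_S: "card S = n_pair n z a b"
    unfolding S_def by (rule card_offdiag_pairs_labelled)
  have card_S_E: "card (S - E) = card S - card E"
    using fin by (intro card_Diff_subset) (auto simp: E_def)
  have "(\<Prod>p\<in>S. half_edge_factor P z (graph_of u) p) =
      (\<Prod>p\<in>S. pow0 (P a b) (if p \<in> E then 1/2 else 0) * pow0 (1 - P a b) (if p \<in> E then 0 else 1/2))"
    by (rule prod.cong) (auto simp: half_edge_factor_def S_def E_def)
  also have "\<dots> = pow0 (P a b) (\<Sum>p\<in>S. if p \<in> E then 1/2 else 0) *
      pow0 (1 - P a b) (\<Sum>p\<in>S. if p \<in> E then 0 else 1/2)"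
    using assms fin by (simp add: prod.distrib prod_pow0)
  also have "(\<Sum>p\<in>S. if p \<in> E then 1/2 else 0) = real (card E) / 2"
    using fin by (simp add: sum.If_cases E_def Int_def)
  also have "(\<Sum>p\<in>S. if p \<in> E then 0 else 1/2) = real (card (S - E)) / 2"
    using fin by (simp add: sum.If_cases Diff_eq Int_def)
  finally have "(\<Prod>p\<in>S. half_edge_factor P z (graph_of u) p) =
      pow0 (P a b) (real (O_cnt n z (graph_of u) a b) / 2) *
      pow0 (1 - P a b) ((real (n_pair n z a b) - real (O_cnt n z (graph_of u) a b)) / 2)"
    using O_cnt_graph_of_le_n_pair[of n z u a b] by (simp add: card_S_E card_E card_S of_nat_diff)
  then show ?thesis by (simp only: S_def)
qed

definition edge_likelihood ::
    "(nat \<Rightarrow> nat \<Rightarrow> real) \<Rightarrow> (nat \<Rightarrow> nat) \<Rightarrow> (nat \<times> nat \<Rightarrow> bool) \<Rightarrow> nat \<times> nat \<Rightarrow> real" where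
  "edge_likelihood P z u p =
     (if u p then P (z (fst p)) (z (snd p)) else 1 - P (z (fst p)) (z (snd p)))"

lemma sbm_joint_graph_of:
  assumes th: "(\<pi>, P) \<in> Theta k" and z: "z \<in> labelings k n"
  shows "sbm_joint k \<pi> P n z (graph_of u) =
    (\<Prod>a\<in>{1..k}. \<pi> a ^ n_cnt n z a) * (\<Prod>p\<in>upper_pairs n. edge_likelihood P z u p)"
proof -
  have P: "0 \<le> P a b" "P a b \<le> 1" "P a b = P b a" if "a \<in> {1..k}" "b \<in> {1..k}" for a b
    using th that by (auto simp: Theta_def)
  have zk: "z i \<in> {1..k}" if "i < n" for i
    using z that by (auto simp: labelings_def PiE_def Pi_def)
  let ?h = "half_edge_factor P z (graph_of u)"
  have "(\<Prod>a\<in>{1..k}. \<Prod>b\<in>{1..k}.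
        pow0 (P a b) (real (O_cnt n z (graph_of u) a b) / 2) *
        pow0 (1 - P a b) ((real (n_pair n z a b) - real (O_cnt n z (graph_of u) a b)) / 2))
      = (\<Prod>ab\<in>{1..k} \<times> {1..k}.
          pow0 (P (fst ab) (snd ab)) (real (O_cnt n z (graph_of u) (fst ab) (snd ab)) / 2) *
          pow0 (1 - P (fst ab) (snd ab))
            ((real (n_pair n z (fst ab) (snd ab)) - real (O_cnt n z (graph_of u) (fst ab) (snd ab))) / 2))"
    by (simp add: prod.cartesian_product case_prod_beta)
  also have "\<dots> = (\<Prod>ab\<in>{1..k} \<times> {1..k}. \<Prod>p\<in>{p \<in> offdiag_pairs n. (z (fst p), z (snd p)) = ab}. ?h p)"
  proof (rule prod.cong[OF refl])
    fix ab :: "nat \<times> nat"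
    assume "ab \<in> {1..k} \<times> {1..k}"
    then show "pow0 (P (fst ab) (snd ab)) (real (O_cnt n z (graph_of u) (fst ab) (snd ab)) / 2) *
        pow0 (1 - P (fst ab) (snd ab))
          ((real (n_pair n z (fst ab) (snd ab)) - real (O_cnt n z (graph_of u) (fst ab) (snd ab))) / 2) =
      (\<Prod>p\<in>{p \<in> offdiag_pairs n. (z (fst p), z (snd p)) = ab}. ?h p)"
      using prod_half_edge_factor_block[where a = "fst ab" and b = "snd ab"] P by auto
  qed
  also have "\<dots> = (\<Prod>p\<in>offdiag_pairs n. ?h p)"
    using zk by (intro prod.group finite_offdiag_pairs) (auto simp: offdiag_pairs_def)
  also have "\<dots> = (\<Prod>p\<in>upper_pairs n. ?h p * ?h (snd p, fst p))"
    by (rule prod_offdiag_pairs)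
  also have "\<dots> = (\<Prod>p\<in>upper_pairs n. edge_likelihood P z u p)"
  proof (rule prod.cong)
    fix p assume "p \<in> upper_pairs n"
    then obtain i j where ij: "p = (i, j)" "i < j" "j < n" by (auto simp: upper_pairs_def)
    then have "P (z j) (z i) = P (z i) (z j)" "0 \<le> P (z i) (z j)" "P (z i) (z j) \<le> 1"
      using P zk by auto
    then show "?h p * ?h (snd p, fst p) = edge_likelihood P z u p"
      using ij pow0_half_mult_self[of "P (z i) (z j)"] pow0_half_mult_self[of "1 - P (z i) (z j)"]
      by (auto simp: half_edge_factor_def edge_likelihood_def graph_of_def pow0_def)
  qed simp
  finally show ?thesis by (simp add: sbm_joint_def)
qed

lemma sum_graphs_prod_edge_likelihood:
  "(\<Sum>u\<in>graphs n. \<Prod>p\<in>upper_pairs n. edge_likelihood P z u p) = 1"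
proof -
  have "(\<Sum>u\<in>graphs n. \<Prod>p\<in>upper_pairs n. edge_likelihood P z u p) =
      (\<Prod>p\<in>upper_pairs n. \<Sum>e\<in>UNIV. edge_likelihood P z (\<lambda>_. e) p)"
    unfolding graphs_def edge_likelihood_def by (rule prod_sum_PiE[symmetric]) auto
  then show ?thesis by (simp add: UNIV_bool edge_likelihood_def)
qed

lemma prod_pow_n_cnt:
  assumes "z \<in> labelings k n"
  shows "(\<Prod>a\<in>{1..k}. (w :: nat \<Rightarrow> real) a ^ n_cnt n z a) = (\<Prod>i<n. w (z i))"
proof -
  have "(\<Prod>i<n. w (z i)) = (\<Prod>a\<in>{1..k}. \<Prod>i\<in>{i \<in> {..<n}. z i = a}. w (z i))"
    using assms by (intro prod.group[symmetric]) (auto simp: labelings_def PiE_def Pi_def)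
  also have "\<dots> = (\<Prod>a\<in>{1..k}. w a ^ n_cnt n z a)"
  proof (rule prod.cong)
    fix a
    have "{i \<in> {..<n}. z i = a} = {i. i < n \<and> z i = a}" by auto
    then show "(\<Prod>i\<in>{i \<in> {..<n}. z i = a}. w (z i)) = w a ^ n_cnt n z a"
      by (simp add: n_cnt_def)
  qed simp
  finally show ?thesis by simp
qed

lemma sum_labelings_prod_pow_n_cnt:
  assumes "(\<Sum>a=1..k. w a) = (1::real)"
  shows "(\<Sum>z\<in>labelings k n. \<Prod>a\<in>{1..k}. w a ^ n_cnt n z a) = 1"
proof -
  have "(\<Sum>z\<in>labelings k n. \<Prod>a\<in>{1..k}. w a ^ n_cnt n z a) = (\<Sum>z\<in>labelings k n. \<Prod>i<n. w (z i))"
    by (intro sum.cong refl prod_pow_n_cnt)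
  also have "\<dots> = (\<Prod>i<n. \<Sum>a\<in>{1..k}. w a)"
    unfolding labelings_def atLeast0LessThan[symmetric] by (rule prod_sum_PiE[symmetric]) auto
  finally show ?thesis using assms by simp
qed

lemma sum_sbm_marg_graphs:
  assumes th: "(\<pi>, P) \<in> Theta k"
  shows "(\<Sum>u\<in>graphs n. sbm_marg k \<pi> P n (graph_of u)) = 1"
proof -
  have "(\<Sum>u\<in>graphs n. sbm_marg k \<pi> P n (graph_of u)) =
      (\<Sum>z\<in>labelings k n. \<Sum>u\<in>graphs n. sbm_joint k \<pi> P n z (graph_of u))"
    unfolding sbm_marg_def by (rule sum.swap)
  also have "\<dots> = (\<Sum>z\<in>labelings k n. \<Prod>a\<in>{1..k}. \<pi> a ^ n_cnt n z a)"
    by (intro sum.cong refl)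
       (simp add: sbm_joint_graph_of[OF th] sum_distrib_left[symmetric] sum_graphs_prod_edge_likelihood)
  also have "\<dots> = 1"
    using th by (intro sum_labelings_prod_pow_n_cnt) (auto simp: Theta_def)
  finally show ?thesis .
qed

lemma sbm_joint_nonneg: "(\<pi>, P) \<in> Theta k \<Longrightarrow> sbm_joint k \<pi> P n z x \<ge> 0"
  unfolding sbm_joint_def Theta_def by (auto intro!: mult_nonneg_nonneg prod_nonneg pow0_nonneg)

lemma sbm_marg_nonneg: "(\<pi>, P) \<in> Theta k \<Longrightarrow> sbm_marg k \<pi> P n x \<ge> 0"
  unfolding sbm_marg_def by (auto intro!: sum_nonneg sbm_joint_nonneg)

lemma O_cnt_cong: "\<forall>i<n. \<forall>j<n. x i j = y i j \<Longrightarrow> O_cnt n z x a b = O_cnt n z y a b"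
  unfolding O_cnt_def by (rule arg_cong[where f = card]) auto

lemma sbm_marg_cong:
  assumes "\<forall>i<n. \<forall>j<n. x i j = y i j"
  shows "sbm_marg k \<pi> P n x = sbm_marg k \<pi> P n y"
proof -
  have "O_cnt n z x a b = O_cnt n z y a b" for z a b
    using assms by (rule O_cnt_cong)
  then show ?thesis by (simp add: sbm_marg_def sbm_joint_def)
qed

lemma KT_cong: "\<forall>i<n. \<forall>j<n. x i j = y i j \<Longrightarrow> KT k n x = KT k n y"
  unfolding KT_def by (simp add: sbm_marg_cong[of n x y])

lemma k_KT_cong: "\<forall>i<n. \<forall>j<n. x i j = y i j \<Longrightarrow> k_KT \<epsilon> n x = k_KT \<epsilon> n y"
  unfolding k_KT_def kt_score_def by (simp add: KT_cong[of n x y])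

section \<open>An upper bound on the KT mixture\<close>

lemma Gamma_half_squared: "Gamma (1/2 :: real) ^ 2 = pi"
  by (simp add: Gamma_one_half_real)

lemma Beta_half_half: "Beta (1/2) (1/2) = (pi :: real)"
  by (simp add: Beta_def Gamma_one_half_real)

lemma Beta_half_one: "Beta (1/2) 1 = (2 :: real)"
proof -
  have "Gamma (1/2 + 1 :: real) = 1/2 * Gamma (1/2)"
    by (rule Gamma_plus1) (use nonpos_Ints_nonpos[of "1/2::real"] in force)
  then have g: "Gamma (3/2 :: real) = 1/2 * Gamma (1/2)" by simp
  have "Beta (1/2) 1 = Gamma (1/2) / Gamma (3/2 :: real)" by (simp add: Beta_def)
  also have "\<dots> = 2" unfolding g by (simp add: Gamma_one_half_real)
  finally show ?thesis .
qed

text \<open>Superadditivity holds without any measurability assumption; this spares us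
  proving the KT integrand measurable.\<close>

lemma nn_integral_superadditive:
  "integral\<^sup>N M f + integral\<^sup>N M g \<le> (\<integral>\<^sup>+x. f x + g x \<partial>M)"
proof -
  let ?X = "\<integral>\<^sup>+x. f x + g x \<partial>M"
  have simple: "integral\<^sup>S M s1 + integral\<^sup>S M s2 \<le> ?X"
    if s1: "simple_function M s1" "s1 \<le> f" and s2: "simple_function M s2" "s2 \<le> g" for s1 s2
  proof -
    have "integral\<^sup>S M s1 + integral\<^sup>S M s2 = (\<integral>\<^sup>+x. s1 x + s2 x \<partial>M)"
      using s1 s2 by (simp add: simple_integral_add nn_integral_eq_simple_integral simple_function_add)
    also have "\<dots> \<le> ?X"
      using s1 s2 by (intro nn_integral_mono add_mono) (auto simp: le_fun_def)
    finally show ?thesis .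
  qed
  have nonempty: "{s. simple_function M s \<and> s \<le> h} \<noteq> {}" for h :: "_ \<Rightarrow> ennreal"
  proof -
    have "(\<lambda>_. 0) \<in> {s. simple_function M s \<and> s \<le> h}" by (auto simp: le_fun_def)
    then show ?thesis by blast
  qed
  have half_simple: "integral\<^sup>S M s1 + integral\<^sup>N M g \<le> ?X"
    if "simple_function M s1" "s1 \<le> f" for s1
  proof -
    have "integral\<^sup>S M s1 + integral\<^sup>N M g =
        (SUP s2\<in>{s. simple_function M s \<and> s \<le> g}. integral\<^sup>S M s1 + integral\<^sup>S M s2)"
      unfolding nn_integral_def by (rule ennreal_SUP_add_right[OF nonempty])
    also have "\<dots> \<le> ?X" by (rule SUP_least) (use simple that in auto)
    finally show ?thesis .
  qed
  have "integral\<^sup>N M f + integral\<^sup>N M g =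
      (SUP s1\<in>{s. simple_function M s \<and> s \<le> f}. integral\<^sup>S M s1 + integral\<^sup>N M g)"
    unfolding nn_integral_def[of M f] by (rule ennreal_SUP_add_left[symmetric, OF nonempty])
  also have "\<dots> \<le> ?X" by (rule SUP_least) (use half_simple in auto)
  finally show ?thesis .
qed

lemma nn_integral_sum_superadditive:
  "finite S \<Longrightarrow> (\<Sum>s\<in>S. integral\<^sup>N M (f s)) \<le> (\<integral>\<^sup>+x. (\<Sum>s\<in>S. f s x) \<partial>M)"
proof (induction S rule: finite_induct)
  case (insert a F)
  have "(\<Sum>s\<in>insert a F. integral\<^sup>N M (f s)) \<le> integral\<^sup>N M (f a) + (\<integral>\<^sup>+x. (\<Sum>s\<in>F. f s x) \<partial>M)"
    using insert by (simp add: add_left_mono)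
  also have "\<dots> \<le> (\<integral>\<^sup>+x. (\<Sum>s\<in>insert a F. f s x) \<partial>M)"
    using insert nn_integral_superadditive by simp
  finally show ?case .
qed simp

abbreviation weights_space :: "nat \<Rightarrow> (nat \<Rightarrow> real) measure" where
  "weights_space k \<equiv> PiM {1..<k} (\<lambda>_. lborel)"

abbreviation probs_space :: "nat \<Rightarrow> (nat \<times> nat \<Rightarrow> real) measure" where
  "probs_space k \<equiv> PiM (upper_idx k) (\<lambda>_. lborel)"

definition KT_integrand ::
    "nat \<Rightarrow> nat \<Rightarrow> (nat \<Rightarrow> nat \<Rightarrow> bool) \<Rightarrow> (nat \<Rightarrow> real) \<Rightarrow> (nat \<times> nat \<Rightarrow> real) \<Rightarrow> ennreal" where
  "KT_integrand k n x p q = ennreal (indicator (Theta k) (pi_of k p, P_of q) *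
     sbm_marg k (pi_of k p) (P_of q) n x * kt_prior k (pi_of k p) (P_of q))"

definition KT_integral :: "nat \<Rightarrow> nat \<Rightarrow> (nat \<Rightarrow> nat \<Rightarrow> bool) \<Rightarrow> ennreal" where
  "KT_integral k n x = (\<integral>\<^sup>+ p. \<integral>\<^sup>+ q. KT_integrand k n x p q \<partial>probs_space k \<partial>weights_space k)"

definition prior_mass :: "nat \<Rightarrow> ennreal" where
  "prior_mass k = (\<integral>\<^sup>+ p. \<integral>\<^sup>+ q.
     ennreal (indicator (Theta k) (pi_of k p, P_of q) * kt_prior k (pi_of k p) (P_of q))
     \<partial>probs_space k \<partial>weights_space k)"

lemma KT_eq_KT_integral: "KT k n x = enn2real (KT_integral k n x)"
  unfolding KT_def KT_integral_def KT_integrand_def ..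

lemma KT_nonneg: "KT k n x \<ge> 0"
  by (simp add: KT_def)

lemma Gamma_half_of_nat_nonneg: "Gamma (real k / 2) \<ge> 0"
  by (cases "k = 0") auto

lemma kt_prior_nonneg: "kt_prior k \<pi> P \<ge> 0"
  unfolding kt_prior_def
  by (intro mult_nonneg_nonneg prod_nonneg divide_nonneg_nonneg Gamma_half_of_nat_nonneg)
     (auto simp: case_prod_beta intro!: mult_nonneg_nonneg)

lemma sum_KT_integral_le_prior_mass:
  "(\<Sum>u\<in>graphs n. KT_integral k n (graph_of u)) \<le> prior_mass k"
proof -
  have "(\<Sum>u\<in>graphs n. KT_integral k n (graph_of u)) \<le>
      (\<integral>\<^sup>+ p. \<integral>\<^sup>+ q. (\<Sum>u\<in>graphs n. KT_integrand k n (graph_of u) p q) \<partial>probs_space k \<partial>weights_space k)"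
    unfolding KT_integral_def
    by (intro order.trans[OF nn_integral_sum_superadditive] nn_integral_mono
        nn_integral_sum_superadditive finite_graphs)
  also have "\<dots> = prior_mass k"
    unfolding prior_mass_def
  proof (intro nn_integral_cong)
    fix p q
    show "(\<Sum>u\<in>graphs n. KT_integrand k n (graph_of u) p q) =
      ennreal (indicator (Theta k) (pi_of k p, P_of q) * kt_prior k (pi_of k p) (P_of q))"
    proof (cases "(pi_of k p, P_of q) \<in> Theta k")
      case True
      then have "(\<Sum>u\<in>graphs n. KT_integrand k n (graph_of u) p q) =
          ennreal ((\<Sum>u\<in>graphs n. sbm_marg k (pi_of k p) (P_of q) n (graph_of u)) * kt_prior k (pi_of k p) (P_of q))"
        unfolding KT_integrand_def sum_distrib_right
        by (subst sum_ennreal[symmetric]) (auto intro!: mult_nonneg_nonneg sbm_marg_nonneg kt_prior_nonneg)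
      then show ?thesis using True by (simp add: sum_sbm_marg_graphs)
    qed (simp add: KT_integrand_def)
  qed
  finally show ?thesis .
qed

definition arcsine_kernel :: "real \<Rightarrow> real" where
  "arcsine_kernel t = indicator {0<..<1} t * (t powr (-1/2) * (1 - t) powr (-1/2))"

definition arcsine_kernel_on :: "real \<Rightarrow> real \<Rightarrow> real" where
  "arcsine_kernel_on c y = indicator {0<..<c} y * (y powr (-1/2) * (c - y) powr (-1/2))"

definition inv_sqrt_kernel :: "real \<Rightarrow> real" where
  "inv_sqrt_kernel t = indicator {0<..<1} t * t powr (-1/2)"

lemma arcsine_kernel_measurable [measurable]: "arcsine_kernel \<in> borel_measurable borel"
  unfolding arcsine_kernel_def by measurable

lemma arcsine_kernel_on_measurable [measurable]: "arcsine_kernel_on c \<in> borel_measurable borel"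
  unfolding arcsine_kernel_on_def by measurable

lemma inv_sqrt_kernel_measurable [measurable]: "inv_sqrt_kernel \<in> borel_measurable borel"
  unfolding inv_sqrt_kernel_def by measurable

lemma arcsine_kernel_nonneg: "arcsine_kernel t \<ge> 0"
  by (simp add: arcsine_kernel_def)

lemma inv_sqrt_kernel_nonneg: "inv_sqrt_kernel t \<ge> 0"
  by (simp add: inv_sqrt_kernel_def)

lemma nn_integral_arcsine_kernel: "(\<integral>\<^sup>+t. ennreal (arcsine_kernel t) \<partial>lborel) = ennreal pi"
proof -
  have "((\<lambda>t. t powr (1/2 - 1) * (1 - t) powr (1/2 - 1)) has_integral pi) {0..(1::real)}"
    using has_integral_Beta_real[of "1/2" "1/2"] by (simp add: Beta_half_half)
  then have "(\<integral>\<^sup>+t. ennreal (t powr (1/2 - 1) * (1 - t) powr (1/2 - 1)) * indicator {0..1} t \<partial>lborel) =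
      ennreal pi"
    by (rule nn_integral_has_integral_lebesgue'[rotated]) auto
  moreover have "(\<integral>\<^sup>+t. ennreal (arcsine_kernel t) \<partial>lborel) =
      (\<integral>\<^sup>+t. ennreal (t powr (1/2 - 1) * (1 - t) powr (1/2 - 1)) * indicator {0..1} t \<partial>lborel)"
    by (intro nn_integral_cong) (auto simp: arcsine_kernel_def indicator_def)
  ultimately show ?thesis by simp
qed

lemma nn_integral_inv_sqrt_kernel_le: "(\<integral>\<^sup>+t. ennreal (inv_sqrt_kernel t) \<partial>lborel) \<le> 2"
proof -
  have "((\<lambda>t. t powr (1/2 - 1) * (1 - t) powr (1 - 1)) has_integral Beta (1/2) 1) {0..(1::real)}"
    by (rule has_integral_Beta_real) auto
  then have "(\<integral>\<^sup>+t. ennreal (t powr (1/2 - 1) * (1 - t) powr (1 - 1)) * indicator {0..1} t \<partial>lborel) = 2"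
    unfolding Beta_half_one by (subst nn_integral_has_integral_lebesgue') auto
  moreover have "(\<integral>\<^sup>+t. ennreal (inv_sqrt_kernel t) \<partial>lborel) \<le>
      (\<integral>\<^sup>+t. ennreal (t powr (1/2 - 1) * (1 - t) powr (1 - 1)) * indicator {0..1} t \<partial>lborel)"
    by (intro nn_integral_mono) (auto simp: inv_sqrt_kernel_def indicator_def)
  ultimately show ?thesis by simp
qed

lemma nn_integral_arcsine_kernel_on_le:
  "(\<integral>\<^sup>+y. ennreal (arcsine_kernel_on c y) \<partial>lborel) \<le> ennreal pi"
proof (cases "c > 0")
  case False
  then have "arcsine_kernel_on c y = 0" for y
    by (auto simp: arcsine_kernel_on_def indicator_def)
  then show ?thesis by simp
next
  case True
  have rescale: "ennreal (arcsine_kernel_on c (c * x)) = ennreal (1 / c) * ennreal (arcsine_kernel x)" for x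
  proof (cases "0 < x \<and> x < 1")
    case x: True
    have "(c * x) powr e = c powr e * x powr e" for e
      using \<open>c > 0\<close> x by (simp add: powr_mult)
    moreover have "(c - c * x) powr e = c powr e * (1 - x) powr e" for e
      using \<open>c > 0\<close> x by (simp add: powr_mult[symmetric] right_diff_distrib)
    ultimately have "arcsine_kernel_on c (c * x) = (c powr (-1/2) * c powr (-1/2)) * arcsine_kernel x"
      using \<open>c > 0\<close> x by (simp add: arcsine_kernel_on_def arcsine_kernel_def indicator_def mult_ac)
    also have "c powr (-1/2) * c powr (-1/2) = 1 / c"
      using \<open>c > 0\<close> by (simp add: powr_add[symmetric] powr_minus_divide)
    finally have "arcsine_kernel_on c (c * x) = 1 / c * arcsine_kernel x" .
    then show ?thesis
      using \<open>c > 0\<close> arcsine_kernel_nonneg[of x] by (simp add: ennreal_mult[symmetric])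
  next
    case False
    then have "\<not> (0 < c * x \<and> c * x < c)"
      using \<open>c > 0\<close> by (auto simp: mult_less_cancel_left1 zero_less_mult_iff)
    then show ?thesis using False by (auto simp: arcsine_kernel_on_def arcsine_kernel_def indicator_def)
  qed
  have "(\<integral>\<^sup>+y. ennreal (arcsine_kernel_on c y) \<partial>lborel) =
      \<bar>c\<bar> * (\<integral>\<^sup>+x. ennreal (arcsine_kernel_on c (0 + c * x)) \<partial>lborel)"
    using True by (intro nn_integral_real_affine) auto
  also have "\<dots> = ennreal c * (\<integral>\<^sup>+x. ennreal (1 / c) * ennreal (arcsine_kernel x) \<partial>lborel)"
    using True by (simp add: rescale)
  also have "\<dots> = ennreal pi"
    using True by (simp add: nn_integral_cmult nn_integral_arcsine_kernel mult.assoc[symmetric]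
        flip: ennreal_mult)
  finally show ?thesis by simp
qed

definition open_simplex :: "nat \<Rightarrow> (nat \<Rightarrow> real) set" where
  "open_simplex k = {p. (\<forall>a\<in>{1..<k}. 0 < p a) \<and> (\<Sum>c\<in>{1..<k}. p c) < 1}"

definition dirichlet_const :: "nat \<Rightarrow> real" where
  "dirichlet_const k = Gamma (real k / 2) / Gamma (1/2) ^ k"

definition dirichlet_density :: "nat \<Rightarrow> (nat \<Rightarrow> real) \<Rightarrow> ennreal" where
  "dirichlet_density k p = ennreal (indicator (open_simplex k) p *
     (dirichlet_const k * (\<Prod>a\<in>{1..<k}. p a powr (-1/2)) * (1 - (\<Sum>c\<in>{1..<k}. p c)) powr (-1/2)))"

definition arcsine_density_prod :: "nat \<Rightarrow> (nat \<times> nat \<Rightarrow> real) \<Rightarrow> ennreal" where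
  "arcsine_density_prod k q = (\<Prod>ab\<in>upper_idx k. ennreal (arcsine_kernel (q ab) / pi))"

definition prior_mass_bound :: "nat \<Rightarrow> real" where
  "prior_mass_bound k = (if k = 1 then 1 else dirichlet_const k * pi * 2 ^ (k - 2))"

lemma finite_upper_idx [simp]: "finite (upper_idx k)"
  by (rule finite_subset[of _ "{..k} \<times> {..k}"]) (auto simp: upper_idx_def)

lemma dirichlet_const_nonneg: "dirichlet_const k \<ge> 0"
  unfolding dirichlet_const_def using Gamma_half_of_nat_nonneg by simp

lemma dirichlet_density_measurable: "dirichlet_density k \<in> borel_measurable (weights_space k)"
proof -
  have "{p \<in> space (weights_space k). p \<in> open_simplex k} \<in> sets (weights_space k)"
    unfolding open_simplex_def by measurable
  then have "(\<lambda>p. indicator (open_simplex k) p :: real) \<in> borel_measurable (weights_space k)"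
    by (subst measurable_cong[where g = "indicator {p \<in> space (weights_space k). p \<in> open_simplex k}"])
       (auto simp: indicator_def)
  then show ?thesis unfolding dirichlet_density_def by measurable
qed

lemma arcsine_density_prod_measurable: "arcsine_density_prod k \<in> borel_measurable (probs_space k)"
  unfolding arcsine_density_prod_def by measurable

text \<open>In the free coordinates the KT prior is the product of a Dirichlet(1/2, ..., 1/2)
  density for the weights and arcsine densities for the connection probabilities.\<close>

lemma kt_prior_le_density_prod:
  assumes k: "k \<ge> 1"
  shows "ennreal (indicator (Theta k) (pi_of k p, P_of q) * kt_prior k (pi_of k p) (P_of q)) \<le>
    dirichlet_density k p * arcsine_density_prod k q"
proof (cases "(pi_of k p, P_of q) \<in> Theta k")
  case True
  have split_last: "{1..k} = insert k {1..<k}" using k by auto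
  have pi_last: "pi_of k p k = 1 - (\<Sum>c\<in>{1..<k}. p c)" by (simp add: pi_of_def)
  have pi_free: "pi_of k p a = p a" if "a \<in> {1..<k}" for a using that by (simp add: pi_of_def)
  have pos: "0 < pi_of k p a" if "a \<in> {1..k}" for a using True that by (auto simp: Theta_def)
  have "0 < p a" if "a \<in> {1..<k}" for a
    using pos[of a] pi_free[OF that] that by auto
  moreover have "(\<Sum>c\<in>{1..<k}. p c) < 1"
    using pos[of k] k pi_last by auto
  ultimately have "p \<in> open_simplex k" by (auto simp: open_simplex_def)
  then have weights: "dirichlet_const k * (\<Prod>a\<in>{1..k}. pi_of k p a powr (-1/2)) =
      indicator (open_simplex k) p * (dirichlet_const k * (\<Prod>a\<in>{1..<k}. p a powr (-1/2)) *
        (1 - (\<Sum>c\<in>{1..<k}. p c)) powr (-1/2))"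
    unfolding split_last by (simp add: pi_last pi_free mult_ac)
  have probs: "(\<Prod>(a, b)\<in>{(a, b). 1 \<le> a \<and> a \<le> b \<and> b \<le> k}.
        1 / Gamma (1/2) ^ 2 * P_of q a b powr (-1/2) * (1 - P_of q a b) powr (-1/2)) =
      (\<Prod>ab\<in>upper_idx k. arcsine_kernel (q ab) / pi)"
    unfolding upper_idx_def
  proof (rule prod.cong[OF refl])
    fix ab assume "ab \<in> {(a, b). 1 \<le> a \<and> a \<le> b \<and> b \<le> k}"
    then obtain a b where ab: "ab = (a, b)" "1 \<le> a" "a \<le> b" "b \<le> k" by auto
    then have "P_of q a b = q (a, b)" by (simp add: P_of_def min_def max_def)
    moreover have "0 \<le> P_of q a b \<and> P_of q a b \<le> 1"
      using True ab unfolding Theta_def by auto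
    ultimately show "(case ab of (a, b) \<Rightarrow> 1 / Gamma (1/2) ^ 2 * P_of q a b powr (-1/2) * (1 - P_of q a b) powr (-1/2))
        = arcsine_kernel (q ab) / pi"
      unfolding ab(1) Gamma_half_squared
      by (cases "q (a, b) = 0"; cases "q (a, b) = 1") (auto simp: arcsine_kernel_def indicator_def)
  qed
  have "kt_prior k (pi_of k p) (P_of q) = (dirichlet_const k * (\<Prod>a\<in>{1..k}. pi_of k p a powr (-1/2))) *
      (\<Prod>ab\<in>upper_idx k. arcsine_kernel (q ab) / pi)"
    unfolding kt_prior_def probs[symmetric] dirichlet_const_def by simp
  then have "ennreal (indicator (Theta k) (pi_of k p, P_of q) * kt_prior k (pi_of k p) (P_of q)) =
      ennreal (dirichlet_const k * (\<Prod>a\<in>{1..k}. pi_of k p a powr (-1/2))) *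
      (\<Prod>ab\<in>upper_idx k. ennreal (arcsine_kernel (q ab) / pi))"
    using True
    by (simp add: ennreal_mult prod_ennreal prod_nonneg mult_nonneg_nonneg dirichlet_const_nonneg
        arcsine_kernel_nonneg)
  then show ?thesis
    unfolding weights dirichlet_density_def arcsine_density_prod_def by simp
qed simp

lemma nn_integral_arcsine_density_prod: "integral\<^sup>N (probs_space k) (arcsine_density_prod k) = 1"
proof -
  interpret product_sigma_finite "\<lambda>_::nat \<times> nat. lborel :: real measure" by standard
  have "(\<integral>\<^sup>+t. ennreal (arcsine_kernel t / pi) \<partial>lborel) = (\<integral>\<^sup>+t. ennreal (1 / pi) * ennreal (arcsine_kernel t) \<partial>lborel)"
    by (intro nn_integral_cong) (simp add: ennreal_mult[symmetric] arcsine_kernel_nonneg)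
  also have "\<dots> = 1"
    by (simp add: nn_integral_cmult nn_integral_arcsine_kernel ennreal_mult[symmetric])
  finally have "(\<integral>\<^sup>+t. ennreal (arcsine_kernel t / pi) \<partial>lborel) = 1" .
  then show ?thesis
    unfolding arcsine_density_prod_def by (subst product_nn_integral_prod) auto
qed

lemma dirichlet_density_fun_upd_last:
  assumes k: "k \<ge> 2"
  shows "dirichlet_density k (x(k - 1 := y)) =
    ennreal (indicator {x. \<forall>a\<in>{1..<k - 1}. 0 < x a} x * (dirichlet_const k * (\<Prod>a\<in>{1..<k - 1}. x a powr (-1/2)))) *
    ennreal (arcsine_kernel_on (1 - (\<Sum>c\<in>{1..<k - 1}. x c)) y)"
proof -
  define I where "I = {1..<k - 1}"
  have Ik: "{1..<k} = insert (k - 1) I" and kI: "k - 1 \<notin> I" and fI: "finite I"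
    using k by (auto simp: I_def)
  have "(\<Prod>a\<in>I. (x(k - 1 := y)) a powr (-1/2)) = (\<Prod>a\<in>I. x a powr (-1/2))"
    "(\<Sum>a\<in>I. (x(k - 1 := y)) a) = (\<Sum>a\<in>I. x a)"
    using kI by (auto intro!: prod.cong sum.cong)
  then have "(\<Prod>a\<in>{1..<k}. (x(k - 1 := y)) a powr (-1/2)) = y powr (-1/2) * (\<Prod>a\<in>I. x a powr (-1/2))"
    "(\<Sum>c\<in>{1..<k}. (x(k - 1 := y)) c) = y + (\<Sum>c\<in>I. x c)"
    unfolding Ik using fI kI by simp_all
  then show ?thesis
    using Ik kI dirichlet_const_nonneg[of k] unfolding I_def[symmetric]
    by (auto simp: dirichlet_density_def arcsine_kernel_on_def open_simplex_def indicator_def algebra_simps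
        prod_nonneg simp flip: ennreal_mult)
qed

lemma nn_integral_dirichlet_density_last_le:
  assumes k: "k \<ge> 2"
  shows "(\<integral>\<^sup>+y. dirichlet_density k (x(k - 1 := y)) \<partial>lborel) \<le>
    ennreal (dirichlet_const k * pi) * (\<Prod>a\<in>{1..<k - 1}. ennreal (inv_sqrt_kernel (x a)))"
proof -
  define I where "I = {1..<k - 1}"
  define r where "r = (\<Sum>c\<in>I. x c)"
  define A where "A = indicator {x. \<forall>a\<in>I. 0 < x a} x * (dirichlet_const k * (\<Prod>a\<in>I. x a powr (-1/2)))"
  have "(\<integral>\<^sup>+y. dirichlet_density k (x(k - 1 := y)) \<partial>lborel) =
      ennreal A * (\<integral>\<^sup>+y. ennreal (arcsine_kernel_on (1 - r) y) \<partial>lborel)"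
    unfolding dirichlet_density_fun_upd_last[OF k] A_def r_def I_def by (rule nn_integral_cmult) simp
  also have "\<dots> \<le> ennreal (dirichlet_const k * pi) * (\<Prod>a\<in>I. ennreal (inv_sqrt_kernel (x a)))"
  proof (cases "r < 1 \<and> (\<forall>a\<in>I. 0 < x a)")
    case True
    have "x a < 1" if "a \<in> I" for a
    proof -
      have "x a \<le> r" unfolding r_def using True that by (intro member_le_sum) (auto simp: I_def intro: less_imp_le)
      then show ?thesis using True by simp
    qed
    then have "A = dirichlet_const k * (\<Prod>a\<in>I. inv_sqrt_kernel (x a))"
      using True by (auto simp: A_def inv_sqrt_kernel_def indicator_def intro!: prod.cong)
    then have A_eq: "ennreal A = ennreal (dirichlet_const k) * (\<Prod>a\<in>I. ennreal (inv_sqrt_kernel (x a)))"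
      by (simp add: prod_ennreal ennreal_mult dirichlet_const_nonneg prod_nonneg inv_sqrt_kernel_nonneg)
    have "ennreal A * (\<integral>\<^sup>+y. ennreal (arcsine_kernel_on (1 - r) y) \<partial>lborel) \<le> ennreal A * ennreal pi"
      by (rule mult_left_mono[OF nn_integral_arcsine_kernel_on_le]) simp
    also have "\<dots> = ennreal (dirichlet_const k * pi) * (\<Prod>a\<in>I. ennreal (inv_sqrt_kernel (x a)))"
      unfolding A_eq by (simp add: ennreal_mult dirichlet_const_nonneg mult_ac)
    finally show ?thesis .
  next
    case False
    then have "A = 0 \<or> (\<forall>y. arcsine_kernel_on (1 - r) y = 0)"
      by (auto simp: A_def arcsine_kernel_on_def indicator_def)
    then show ?thesis by auto
  qed
  finally show ?thesis by (simp add: I_def)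
qed

lemma nn_integral_dirichlet_density_le:
  assumes k: "k \<ge> 1"
  shows "integral\<^sup>N (weights_space k) (dirichlet_density k) \<le> ennreal (prior_mass_bound k)"
proof (cases "k = 1")
  case True
  have "dirichlet_density 1 (\<lambda>_. undefined) = 1"
    by (simp add: dirichlet_density_def dirichlet_const_def open_simplex_def Gamma_one_half_real)
  then show ?thesis
    using True by (simp add: PiM_empty nn_integral_count_space_finite prior_mass_bound_def)
next
  case False
  interpret product_sigma_finite "\<lambda>_::nat. lborel :: real measure" by standard
  define I where "I = {1..<k - 1}"
  have Ik: "{1..<k} = insert (k - 1) I" and kI: "k - 1 \<notin> I" and fI: "finite I" and cI: "card I = k - 2"
    using k False by (auto simp: I_def)
  have "integral\<^sup>N (weights_space k) (dirichlet_density k) =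
      (\<integral>\<^sup>+x. (\<integral>\<^sup>+y. dirichlet_density k (x(k - 1 := y)) \<partial>lborel) \<partial>PiM I (\<lambda>_. lborel))"
    using dirichlet_density_measurable[of k] unfolding Ik by (rule product_nn_integral_insert[OF fI kI])
  also have "\<dots> \<le> (\<integral>\<^sup>+x. ennreal (dirichlet_const k * pi) * (\<Prod>a\<in>I. ennreal (inv_sqrt_kernel (x a)))
      \<partial>PiM I (\<lambda>_. lborel))"
    unfolding I_def using k False by (intro nn_integral_mono nn_integral_dirichlet_density_last_le) auto
  also have "\<dots> = ennreal (dirichlet_const k * pi) * (\<integral>\<^sup>+t. ennreal (inv_sqrt_kernel t) \<partial>lborel) ^ (k - 2)"
  proof -
    have "(\<integral>\<^sup>+x. (\<Prod>a\<in>I. ennreal (inv_sqrt_kernel (x a))) \<partial>PiM I (\<lambda>_. lborel)) =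
        (\<Prod>a\<in>I. \<integral>\<^sup>+t. ennreal (inv_sqrt_kernel t) \<partial>lborel)"
      by (rule product_nn_integral_prod[OF fI]) simp
    then show ?thesis using cI by (subst nn_integral_cmult) auto
  qed
  also have "\<dots> \<le> ennreal (dirichlet_const k * pi) * 2 ^ (k - 2)"
    by (intro mult_left_mono power_mono nn_integral_inv_sqrt_kernel_le) auto
  also have "\<dots> = ennreal (prior_mass_bound k)"
    using False by (simp add: prior_mass_bound_def ennreal_mult dirichlet_const_nonneg ennreal_power[symmetric])
  finally show ?thesis .
qed

lemma prior_mass_bound_pos: "k \<ge> 1 \<Longrightarrow> prior_mass_bound k > 0"
  by (auto simp: prior_mass_bound_def dirichlet_const_def Gamma_one_half_real)

lemma prior_mass_le: "k \<ge> 1 \<Longrightarrow> prior_mass k \<le> ennreal (prior_mass_bound k)"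
proof -
  assume k: "k \<ge> 1"
  have "prior_mass k \<le>
      (\<integral>\<^sup>+ p. \<integral>\<^sup>+ q. dirichlet_density k p * arcsine_density_prod k q \<partial>probs_space k \<partial>weights_space k)"
    unfolding prior_mass_def by (intro nn_integral_mono kt_prior_le_density_prod k)
  also have "\<dots> = integral\<^sup>N (weights_space k) (dirichlet_density k)"
    by (simp add: nn_integral_cmult arcsine_density_prod_measurable nn_integral_arcsine_density_prod)
  also have "\<dots> \<le> ennreal (prior_mass_bound k)"
    by (rule nn_integral_dirichlet_density_le[OF k])
  finally show ?thesis .
qed

lemma KT_integral_less_top:
  assumes "k \<ge> 1" "u \<in> graphs n"
  shows "KT_integral k n (graph_of u) < top"
proof -
  have "KT_integral k n (graph_of u) \<le> (\<Sum>u\<in>graphs n. KT_integral k n (graph_of u))"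
    using assms(2) by (intro member_le_sum) auto
  also have "\<dots> \<le> ennreal (prior_mass_bound k)"
    using sum_KT_integral_le_prior_mass prior_mass_le[OF assms(1)] by (rule order.trans)
  finally show ?thesis using ennreal_less_top order.strict_trans1 by blast
qed

lemma sum_KT_le_prior_mass_bound:
  assumes k: "k \<ge> 1"
  shows "(\<Sum>u\<in>graphs n. KT k n (graph_of u)) \<le> prior_mass_bound k"
proof -
  have "(\<Sum>u\<in>graphs n. KT k n (graph_of u)) = enn2real (\<Sum>u\<in>graphs n. KT_integral k n (graph_of u))"
    unfolding KT_eq_KT_integral using KT_integral_less_top[OF k] by (subst enn2real_sum) auto
  also have "\<dots> \<le> prior_mass_bound k"
    using sum_KT_integral_le_prior_mass prior_mass_le[OF k] prior_mass_bound_pos[OF k]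
    by (intro enn2real_leI) (auto intro: order.trans)
  finally show ?thesis .
qed

lemma KT_le_prior_mass_bound:
  assumes "k \<ge> 1" "u \<in> graphs n"
  shows "KT k n (graph_of u) \<le> prior_mass_bound k"
  using member_le_sum[of u "graphs n" "\<lambda>u. KT k n (graph_of u)"] sum_KT_le_prior_mass_bound[of k n] assms
  by (simp add: KT_nonneg)

section \<open>A lower bound on the KT mixture\<close>

lemma one_minus_powr_ge_exp:
  fixes y e :: real
  assumes "0 \<le> y" "y \<le> 1/2" "0 \<le> e" "e * y \<le> 1"
  shows "(1 - y) powr e \<ge> exp (-2)"
proof -
  have "- y - 2 * y\<^sup>2 \<le> ln (1 - y)" using ln_one_minus_pos_lower_bound[of y] assms by auto
  moreover have "y * y \<le> y * (1/2)" using assms by (intro mult_left_mono) auto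
  ultimately have "- 2 * y \<le> ln (1 - y)" by (simp add: power2_eq_square)
  then have "e * (- 2 * y) \<le> e * ln (1 - y)" using assms by (intro mult_left_mono) auto
  moreover have "-2 \<le> e * (- 2 * y)" using assms by linarith
  ultimately show ?thesis using assms by (simp add: powr_def)
qed

lemma pow0_one_minus_ge_exp:
  fixes y e :: real
  assumes "0 \<le> y" "y \<le> 1/2" "0 \<le> e" "e * y \<le> 1"
  shows "pow0 (1 - y) e \<ge> exp (-2)"
  using one_minus_powr_ge_exp[OF assms] by (auto simp: pow0_def)

text \<open>Placing the window on the side of \<open>c\<close> away from the nearer endpoint keeps it inside (0,1).\<close>

definition prob_window :: "nat \<Rightarrow> real \<Rightarrow> real set" where
  "prob_window n c = (if c \<le> 1/2 then {c<..c + 1 / real n ^ 2} else {c - 1 / real n ^ 2..<c})"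

lemma real_of_nat_square_ge_4: "n \<ge> 2 \<Longrightarrow> real n ^ 2 \<ge> 4"
  using power_mono[of 2 "real n" 2] by simp

lemma inverse_square_le_quarter: "n \<ge> 2 \<Longrightarrow> 1 / real n ^ 2 \<le> 1/4"
  using real_of_nat_square_ge_4[of n] by (intro divide_left_mono) auto

lemma prob_window_subset:
  assumes "n \<ge> 2" "0 \<le> c" "c \<le> 1" "x \<in> prob_window n c"
  shows "0 < x" "x < 1"
proof -
  have "(c \<le> 1/2 \<and> c < x \<and> x \<le> c + 1 / real n ^ 2) \<or> (c > 1/2 \<and> c - 1 / real n ^ 2 \<le> x \<and> x < c)"
    using assms(4) by (auto simp: prob_window_def split: if_splits)
  then show "0 < x" "x < 1"
    using assms(2,3) inverse_square_le_quarter[OF assms(1)] by linarith+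
qed

lemma pow0_likelihood_shift_ge:
  fixes c x e1 e2 :: real
  assumes n: "n \<ge> 2" and c: "0 \<le> c" "c \<le> 1/2" and x: "c < x" "x \<le> c + 1 / real n ^ 2"
    and e: "0 \<le> e1" "0 \<le> e2" "e2 \<le> real n ^ 2 / 2"
  shows "exp (-2) * (pow0 c e1 * pow0 (1 - c) e2) \<le> pow0 x e1 * pow0 (1 - x) e2"
proof -
  define t where "t = 1 / real n ^ 2"
  have n_sq: "real n ^ 2 > 0" using n by simp
  have "e2 * (2 * t) = (2 * e2) / real n ^ 2" by (simp add: t_def)
  also have "\<dots> \<le> 1" using e n_sq by (simp add: divide_le_eq)
  finally have t: "0 \<le> 2 * t" "2 * t \<le> 1/2" "e2 * (2 * t) \<le> 1"
    using inverse_square_le_quarter[OF n] by (auto simp: t_def)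
  have "(1 - c) * (1 - 2 * t) \<le> 1 - x"
  proof -
    have "0 \<le> (1 - 2 * c) * t" using c t by auto
    moreover have "(1 - c) * (1 - 2 * t) = 1 - c - 2 * t + 2 * (c * t)" "(1 - 2 * c) * t = t - 2 * (c * t)"
      by (simp_all add: algebra_simps)
    ultimately show ?thesis using x by (simp only: t_def[symmetric])
  qed
  then have b: "pow0 (1 - c) e2 * pow0 (1 - 2 * t) e2 \<le> pow0 (1 - x) e2"
    using c t e by (subst pow0_mult[symmetric]) (auto intro!: pow0_mono)
  have "exp (-2) * (pow0 c e1 * pow0 (1 - c) e2) \<le> pow0 c e1 * (pow0 (1 - c) e2 * pow0 (1 - 2 * t) e2)"
    using pow0_one_minus_ge_exp[of "2 * t" e2] t e c
    by (simp add: mult_ac mult_left_mono pow0_nonneg mult_nonneg_nonneg)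
  also have "\<dots> \<le> pow0 x e1 * pow0 (1 - x) e2"
    using b c x e t by (intro mult_mono pow0_mono) (auto intro!: pow0_nonneg mult_nonneg_nonneg)
  finally show ?thesis .
qed

lemma pow0_likelihood_window_ge:
  fixes c x e1 e2 :: real
  assumes n: "n \<ge> 2" and c: "0 \<le> c" "c \<le> 1" and x: "x \<in> prob_window n c"
    and e: "0 \<le> e1" "e1 \<le> real n ^ 2 / 2" "0 \<le> e2" "e2 \<le> real n ^ 2 / 2"
  shows "exp (-2) * (pow0 c e1 * pow0 (1 - c) e2) \<le> pow0 x e1 * pow0 (1 - x) e2"
proof (cases "c \<le> 1/2")
  case True
  then show ?thesis
    using x by (intro pow0_likelihood_shift_ge[OF n]) (use c e in \<open>auto simp: prob_window_def\<close>)
next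
  case False
  \<comment> \<open>Reflect \<open>c \<mapsto> 1 - c\<close>, \<open>x \<mapsto> 1 - x\<close> and swap the exponents.\<close>
  have "exp (-2) * (pow0 (1 - c) e2 * pow0 (1 - (1 - c)) e1) \<le> pow0 (1 - x) e2 * pow0 (1 - (1 - x)) e1"
    using x False by (intro pow0_likelihood_shift_ge[OF n]) (use c e in \<open>auto simp: prob_window_def\<close>)
  then show ?thesis by (simp add: mult_ac)
qed

definition weight_box :: "nat \<Rightarrow> nat \<Rightarrow> (nat \<Rightarrow> real) \<Rightarrow> (nat \<Rightarrow> real) set" where
  "weight_box k n \<pi> = PiE {1..<k} (\<lambda>a. {\<pi> a * (1 - 1 / real n)<..\<pi> a})"

definition prob_box :: "nat \<Rightarrow> nat \<Rightarrow> (nat \<Rightarrow> nat \<Rightarrow> real) \<Rightarrow> (nat \<times> nat \<Rightarrow> real) set" where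
  "prob_box k n P = PiE (upper_idx k) (\<lambda>ab. prob_window n (P (fst ab) (snd ab)))"

lemma pi_of_weight_box:
  assumes k: "k \<ge> 1" and th: "(\<pi>, P) \<in> Theta k" and n: "n \<ge> 2" and p: "p \<in> weight_box k n \<pi>"
  shows "\<And>a. a \<in> {1..k} \<Longrightarrow> \<pi> a * (1 - 1 / real n) \<le> pi_of k p a \<and> 0 < pi_of k p a \<and> pi_of k p a \<le> 1"
    and "(\<Sum>a=1..k. pi_of k p a) = 1"
proof -
  have \<pi>: "0 < \<pi> a" "\<pi> a \<le> 1" if "a \<in> {1..k}" for a using th that by (auto simp: Theta_def)
  have shrink_pos: "0 < 1 - 1 / real n" "1 - 1 / real n \<le> 1" using n by (auto simp: field_simps)
  have p_free: "\<pi> a * (1 - 1 / real n) < p a \<and> p a \<le> \<pi> a" if "a \<in> {1..<k}" for a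
    using p that by (auto simp: weight_box_def PiE_def Pi_def)
  have p_pos: "0 < p a" if "a \<in> {1..<k}" for a
  proof -
    have "0 < \<pi> a * (1 - 1 / real n)" using \<pi>[of a] that shrink_pos by (intro mult_pos_pos) auto
    then show ?thesis using p_free[OF that] by linarith
  qed
  have split_last: "(\<Sum>a=1..k. f a) = (\<Sum>a=1..<k. f a) + f k" for f :: "nat \<Rightarrow> real"
    using k by (simp add: atLeastLessThanSuc_atLeastAtMost[symmetric] Suc_le_eq)
  have pi_last: "pi_of k p k = 1 - (\<Sum>c=1..<k. p c)" by (simp add: pi_of_def)
  have "(\<Sum>c=1..<k. p c) \<le> (\<Sum>c=1..<k. \<pi> c)" using p_free by (intro sum_mono) auto
  then have last_ge: "\<pi> k \<le> pi_of k p k"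
    using th split_last[of \<pi>] pi_last by (auto simp: Theta_def)
  have "0 \<le> (\<Sum>c=1..<k. p c)" using p_pos by (intro sum_nonneg) (auto intro: less_imp_le)
  then have last_le: "pi_of k p k \<le> 1" using pi_last by simp
  show "\<pi> a * (1 - 1 / real n) \<le> pi_of k p a \<and> 0 < pi_of k p a \<and> pi_of k p a \<le> 1" if "a \<in> {1..k}" for a
  proof (cases "a < k")
    case True
    then show ?thesis using that p_free[of a] p_pos[of a] \<pi>[OF that] by (auto simp: pi_of_def)
  next
    case False
    then have "a = k" using that by auto
    moreover have "\<pi> k * (1 - 1 / real n) \<le> \<pi> k" using \<pi>[of k] k shrink_pos by (simp add: mult_le_cancel_left1)
    then have "\<pi> k * (1 - 1 / real n) \<le> pi_of k p k" using last_ge by linarith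
    ultimately show ?thesis using last_ge last_le \<pi>[of k] k by auto
  qed
  have "(\<Sum>a=1..<k. pi_of k p a) = (\<Sum>a=1..<k. p a)" by (rule sum.cong) (auto simp: pi_of_def)
  then show "(\<Sum>a=1..k. pi_of k p a) = 1" using split_last[of "pi_of k p"] pi_last by simp
qed

lemma P_of_prob_box:
  assumes th: "(\<pi>, P) \<in> Theta k" and q: "q \<in> prob_box k n P" and ab: "a \<in> {1..k}" "b \<in> {1..k}"
  shows "P_of q a b \<in> prob_window n (P a b)"
proof -
  have "(min a b, max a b) \<in> upper_idx k" using ab by (auto simp: upper_idx_def)
  then have "q (min a b, max a b) \<in> prob_window n (P (min a b) (max a b))"
    using q by (auto simp: prob_box_def PiE_def Pi_def)
  moreover have "P (min a b) (max a b) = P a b"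
    using th ab by (cases "a \<le> b") (auto simp: min_def max_def Theta_def)
  ultimately show ?thesis by (simp add: P_of_def)
qed

lemma boxes_in_Theta:
  assumes k: "k \<ge> 1" and th: "(\<pi>, P) \<in> Theta k" and n: "n \<ge> 2"
    and p: "p \<in> weight_box k n \<pi>" and q: "q \<in> prob_box k n P"
  shows "(pi_of k p, P_of q) \<in> Theta k"
proof -
  have "0 < P_of q a b \<and> P_of q a b < 1" if "a \<in> {1..k}" "b \<in> {1..k}" for a b
    using prob_window_subset[OF n _ _ P_of_prob_box[OF th q that]] th that by (auto simp: Theta_def)
  moreover have "P_of q a b = P_of q b a" for a b by (simp add: P_of_def min.commute max.commute)
  ultimately show ?thesis
    using pi_of_weight_box[OF k th n p] unfolding Theta_def by (auto intro: less_imp_le)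
qed

lemma prod_const_mult_le:
  fixes f g :: "'a \<Rightarrow> real"
  assumes "\<And>a. a \<in> A \<Longrightarrow> 0 \<le> g a" "\<And>a. a \<in> A \<Longrightarrow> c * g a \<le> f a" "0 \<le> c"
  shows "c ^ card A * (\<Prod>a\<in>A. g a) \<le> (\<Prod>a\<in>A. f a)"
proof -
  have "c ^ card A * (\<Prod>a\<in>A. g a) = (\<Prod>a\<in>A. c * g a)"
    by (simp add: prod.distrib)
  also have "\<dots> \<le> (\<Prod>a\<in>A. f a)"
    using assms by (intro prod_mono) auto
  finally show ?thesis .
qed

lemma prod_pow_n_cnt_weight_box_ge:
  assumes k: "k \<ge> 1" and th: "(\<pi>, P) \<in> Theta k" and n: "n \<ge> 2" and p: "p \<in> weight_box k n \<pi>"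
  shows "exp (-2) ^ k * (\<Prod>a\<in>{1..k}. \<pi> a ^ n_cnt n z a) \<le> (\<Prod>a\<in>{1..k}. pi_of k p a ^ n_cnt n z a)"
proof -
  have "exp (-2) ^ card {1..k} * (\<Prod>a\<in>{1..k}. \<pi> a ^ n_cnt n z a) \<le> (\<Prod>a\<in>{1..k}. pi_of k p a ^ n_cnt n z a)"
  proof (rule prod_const_mult_le)
    fix a assume a: "a \<in> {1..k}"
    have \<pi>: "0 < \<pi> a" using th a by (auto simp: Theta_def)
    have shrink: "0 \<le> 1 - 1 / real n" "1 / real n \<le> 1/2" using n by (auto simp: field_simps)
    have "real (n_cnt n z a) * (1 / real n) \<le> 1"
      using n_cnt_le[of n z a] n by (simp add: field_simps)
    then have "exp (-2) \<le> (1 - 1 / real n) powr real (n_cnt n z a)"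
      using shrink by (intro one_minus_powr_ge_exp) auto
    then have "exp (-2) \<le> (1 - 1 / real n) ^ n_cnt n z a"
      using shrink n by (simp add: powr_realpow)
    then have "exp (-2) * \<pi> a ^ n_cnt n z a \<le> (\<pi> a * (1 - 1 / real n)) ^ n_cnt n z a"
      using \<pi> by (simp add: power_mult_distrib mult_right_mono mult.commute)
    also have "\<dots> \<le> pi_of k p a ^ n_cnt n z a"
      using pi_of_weight_box(1)[OF k th n p a] \<pi> shrink by (intro power_mono) auto
    finally show "exp (-2) * \<pi> a ^ n_cnt n z a \<le> pi_of k p a ^ n_cnt n z a" .
  qed (use th in \<open>auto simp: Theta_def intro: less_imp_le\<close>)
  then show ?thesis by simp
qed

lemma sbm_joint_box_ge:
  assumes k: "k \<ge> 1" and th: "(\<pi>, P) \<in> Theta k" and n: "n \<ge> 2"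
    and p: "p \<in> weight_box k n \<pi>" and q: "q \<in> prob_box k n P"
  shows "exp (-2) ^ (k + k * k) * sbm_joint k \<pi> P n z (graph_of u) \<le>
    sbm_joint k (pi_of k p) (P_of q) n z (graph_of u)"
proof -
  define obs where "obs a b = real (O_cnt n z (graph_of u) a b)" for a b
  define F where "F P' a b = pow0 (P' a b) (obs a b / 2) * pow0 (1 - P' a b) ((real (n_pair n z a b) - obs a b) / 2)"
    for P' :: "nat \<Rightarrow> nat \<Rightarrow> real" and a b
  have P: "0 \<le> P a b" "P a b \<le> 1" if "a \<in> {1..k}" "b \<in> {1..k}" for a b
    using th that by (auto simp: Theta_def)
  have F_nonneg: "0 \<le> F P a b" if "a \<in> {1..k}" "b \<in> {1..k}" for a b
    unfolding F_def using P[OF that] by (intro mult_nonneg_nonneg pow0_nonneg) auto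
  have F_ge: "exp (-2) * F P a b \<le> F (P_of q) a b" if ab: "a \<in> {1..k}" "b \<in> {1..k}" for a b
  proof -
    have "obs a b \<le> real (n_pair n z a b)"
      using O_cnt_graph_of_le_n_pair[of n z u a b] by (simp add: obs_def)
    moreover have "real (n_pair n z a b) \<le> real n ^ 2"
      using n_pair_le[of n z a b] by (metis of_nat_le_iff of_nat_power)
    moreover have "0 \<le> obs a b" by (simp add: obs_def)
    ultimately show ?thesis unfolding F_def
      unfolding diff_divide_distrib
      by (intro pow0_likelihood_window_ge[OF n P[OF ab] P_of_prob_box[OF th q ab]]) linarith+
  qed
  have "(exp (-2) ^ k) ^ card {1..k} * (\<Prod>a\<in>{1..k}. \<Prod>b\<in>{1..k}. F P a b) \<le>
      (\<Prod>a\<in>{1..k}. \<Prod>b\<in>{1..k}. F (P_of q) a b)"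
  proof (rule prod_const_mult_le)
    fix a assume "a \<in> {1..k}"
    then show "exp (-2) ^ k * (\<Prod>b\<in>{1..k}. F P a b) \<le> (\<Prod>b\<in>{1..k}. F (P_of q) a b)"
      using prod_const_mult_le[of "{1..k}" "F P a" "exp (-2)" "F (P_of q) a"] F_nonneg F_ge by auto
  qed (auto intro!: prod_nonneg F_nonneg)
  then have blocks: "exp (-2) ^ (k * k) * (\<Prod>a\<in>{1..k}. \<Prod>b\<in>{1..k}. F P a b) \<le>
      (\<Prod>a\<in>{1..k}. \<Prod>b\<in>{1..k}. F (P_of q) a b)"
    by (simp add: power_mult)
  have weights_nonneg: "0 \<le> (\<Prod>a\<in>{1..k}. \<pi> a ^ n_cnt n z a)"
    using th by (auto simp: Theta_def intro!: prod_nonneg)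
  note weights = prod_pow_n_cnt_weight_box_ge[OF k th n p, of z]
  have "0 \<le> (\<Prod>a\<in>{1..k}. pi_of k p a ^ n_cnt n z a)"
    using order.trans[OF _ weights] weights_nonneg by simp
  moreover have "0 \<le> (\<Prod>a\<in>{1..k}. \<Prod>b\<in>{1..k}. F P a b)"
    using F_nonneg by (auto intro!: prod_nonneg)
  ultimately have "(exp (-2) ^ k * (\<Prod>a\<in>{1..k}. \<pi> a ^ n_cnt n z a)) *
      (exp (-2) ^ (k * k) * (\<Prod>a\<in>{1..k}. \<Prod>b\<in>{1..k}. F P a b)) \<le>
      (\<Prod>a\<in>{1..k}. pi_of k p a ^ n_cnt n z a) * (\<Prod>a\<in>{1..k}. \<Prod>b\<in>{1..k}. F (P_of q) a b)"
    using weights weights_nonneg blocks by (intro mult_mono) auto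
  then show ?thesis
    unfolding sbm_joint_def F_def obs_def by (simp add: power_add mult_ac)
qed

lemma sbm_marg_box_ge:
  assumes "k \<ge> 1" "(\<pi>, P) \<in> Theta k" "n \<ge> 2" "p \<in> weight_box k n \<pi>" "q \<in> prob_box k n P"
  shows "exp (-2) ^ (k + k * k) * sbm_marg k \<pi> P n (graph_of u) \<le> sbm_marg k (pi_of k p) (P_of q) n (graph_of u)"
  unfolding sbm_marg_def sum_distrib_left by (intro sum_mono sbm_joint_box_ge[OF assms])

lemma powr_neg_half_ge_1: "0 < (x::real) \<Longrightarrow> x \<le> 1 \<Longrightarrow> 1 \<le> x powr (-1/2)"
  using powr_mono2'[of "-1/2" x 1] by simp

lemma kt_prior_ge:
  assumes th: "(\<pi>, P) \<in> Theta k" and P: "\<And>a b. a \<in> {1..k} \<Longrightarrow> b \<in> {1..k} \<Longrightarrow> 0 < P a b \<and> P a b < 1"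
  shows "dirichlet_const k * (1 / pi) ^ card (upper_idx k) \<le> kt_prior k \<pi> P"
proof -
  have weights: "1 \<le> (\<Prod>a\<in>{1..k}. \<pi> a powr (-1/2))"
    using th by (intro prod_ge_1 powr_neg_half_ge_1) (auto simp: Theta_def)
  have "(1 / pi) ^ card (upper_idx k) = (\<Prod>ab\<in>upper_idx k. 1 / pi)"
    by simp
  also have "\<dots> \<le> (\<Prod>(a, b)\<in>upper_idx k. 1 / pi * P a b powr (-1/2) * (1 - P a b) powr (-1/2))"
  proof (rule prod_mono)
    fix ab assume "ab \<in> upper_idx k"
    then obtain a b where ab: "ab = (a, b)" "a \<in> {1..k}" "b \<in> {1..k}" by (auto simp: upper_idx_def)
    then have "1 \<le> P a b powr (-1/2)" "1 \<le> (1 - P a b) powr (-1/2)"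
      using P[of a b] powr_neg_half_ge_1[of "P a b"] powr_neg_half_ge_1[of "1 - P a b"] by auto
    then have "1 \<le> P a b powr (-1/2) * (1 - P a b) powr (-1/2)"
      using mult_mono[of 1 _ 1] by force
    then show "0 \<le> 1 / pi \<and> 1 / pi \<le> (case ab of (a, b) \<Rightarrow> 1 / pi * P a b powr (-1/2) * (1 - P a b) powr (-1/2))"
      unfolding ab(1) using mult_left_mono[of 1 _ "1 / pi"] by (simp add: mult.assoc)
  qed
  finally have probs: "(1 / pi) ^ card (upper_idx k) \<le>
      (\<Prod>(a, b)\<in>upper_idx k. 1 / pi * P a b powr (-1/2) * (1 - P a b) powr (-1/2))" .
  have "dirichlet_const k * (1 / pi) ^ card (upper_idx k) \<le>
      (dirichlet_const k * (\<Prod>a\<in>{1..k}. \<pi> a powr (-1/2))) *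
      (\<Prod>(a, b)\<in>upper_idx k. 1 / pi * P a b powr (-1/2) * (1 - P a b) powr (-1/2))"
    using weights probs dirichlet_const_nonneg[of k]
    by (intro mult_mono) (auto simp: mult_le_cancel_left1 intro: order.trans[OF zero_le_power])
  then show ?thesis
    by (simp add: kt_prior_def dirichlet_const_def Gamma_half_squared upper_idx_def)
qed

definition KT_lower_const :: "nat \<Rightarrow> real" where
  "KT_lower_const k = dirichlet_const k * (1 / pi) ^ card (upper_idx k) * exp (-2) ^ (k + k * k)"

lemma KT_lower_const_pos: "k \<ge> 1 \<Longrightarrow> KT_lower_const k > 0"
  by (simp add: KT_lower_const_def dirichlet_const_def Gamma_one_half_real)

lemma KT_integrand_box_ge:
  assumes k: "k \<ge> 1" and th: "(\<pi>, P) \<in> Theta k" and n: "n \<ge> 2"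
  shows "ennreal (KT_lower_const k * sbm_marg k \<pi> P n (graph_of u)) *
      indicator (weight_box k n \<pi>) p * indicator (prob_box k n P) q \<le> KT_integrand k n (graph_of u) p q"
proof (cases "p \<in> weight_box k n \<pi> \<and> q \<in> prob_box k n P")
  case True
  then have p: "p \<in> weight_box k n \<pi>" and q: "q \<in> prob_box k n P" by auto
  have th': "(pi_of k p, P_of q) \<in> Theta k" by (rule boxes_in_Theta[OF k th n p q])
  have "0 < P_of q a b \<and> P_of q a b < 1" if "a \<in> {1..k}" "b \<in> {1..k}" for a b
    using prob_window_subset[OF n _ _ P_of_prob_box[OF th q that]] th that by (auto simp: Theta_def)
  then have prior: "dirichlet_const k * (1 / pi) ^ card (upper_idx k) \<le> kt_prior k (pi_of k p) (P_of q)"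
    by (intro kt_prior_ge[OF th']) auto
  have "KT_lower_const k * sbm_marg k \<pi> P n (graph_of u) =
      (exp (-2) ^ (k + k * k) * sbm_marg k \<pi> P n (graph_of u)) * (dirichlet_const k * (1 / pi) ^ card (upper_idx k))"
    by (simp add: KT_lower_const_def mult_ac)
  also have "\<dots> \<le> sbm_marg k (pi_of k p) (P_of q) n (graph_of u) * kt_prior k (pi_of k p) (P_of q)"
    using sbm_marg_box_ge[OF k th n p q] prior sbm_marg_nonneg[OF th] sbm_marg_nonneg[OF th']
      dirichlet_const_nonneg[of k]
    by (intro mult_mono) auto
  finally show ?thesis using True th' unfolding KT_integrand_def by (auto intro!: ennreal_leI)
qed auto

lemma emeasure_weight_box:
  assumes "n \<ge> 1" "\<And>a. a \<in> {1..<k} \<Longrightarrow> 0 \<le> \<pi> a"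
  shows "emeasure (weights_space k) (weight_box k n \<pi>) = ennreal ((\<Prod>a\<in>{1..<k}. \<pi> a) * (1 / real n) ^ (k - 1))"
proof -
  interpret product_sigma_finite "\<lambda>_::nat. lborel :: real measure" by standard
  have "emeasure (weights_space k) (weight_box k n \<pi>) =
      (\<Prod>a\<in>{1..<k}. emeasure lborel {\<pi> a * (1 - 1 / real n)<..\<pi> a})"
    unfolding weight_box_def by (subst emeasure_PiM) auto
  also have "\<dots> = (\<Prod>a\<in>{1..<k}. ennreal (\<pi> a * (1 / real n)))"
    using assms by (intro prod.cong refl) (auto simp: algebra_simps mult_le_cancel_left1)
  also have "\<dots> = ennreal (\<Prod>a\<in>{1..<k}. \<pi> a * (1 / real n))"
    using assms by (intro prod_ennreal) auto
  also have "(\<Prod>a\<in>{1..<k}. \<pi> a * (1 / real n)) = (\<Prod>a\<in>{1..<k}. \<pi> a) * (1 / real n) ^ (k - 1)"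
    by (subst prod.distrib) simp
  finally show ?thesis .
qed

lemma emeasure_prob_window: "emeasure lborel (prob_window n c) = ennreal (1 / real n ^ 2)"
  by (simp add: prob_window_def)

lemma emeasure_prob_box:
  "emeasure (probs_space k) (prob_box k n P) = ennreal ((1 / real n ^ 2) ^ card (upper_idx k))"
proof -
  interpret product_sigma_finite "\<lambda>_::nat \<times> nat. lborel :: real measure" by standard
  have "prob_window n c \<in> sets lborel" for c by (simp add: prob_window_def)
  then show ?thesis
    unfolding prob_box_def by (subst emeasure_PiM) (auto simp: emeasure_prob_window ennreal_power)
qed

lemma Theta_weight_pos: "(\<pi>, P) \<in> Theta k \<Longrightarrow> a \<in> {1..<k} \<Longrightarrow> 0 < \<pi> a"
  by (simp add: Theta_def)

lemma nn_integral_boxes: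
  assumes n: "n \<ge> 1" and th: "(\<pi>, P) \<in> Theta k" and c: "c \<ge> 0"
  shows "(\<integral>\<^sup>+ p. \<integral>\<^sup>+ q. ennreal c * indicator (weight_box k n \<pi>) p * indicator (prob_box k n P) q
      \<partial>probs_space k \<partial>weights_space k) =
    ennreal (c * (\<Prod>a\<in>{1..<k}. \<pi> a) * (1 / real n) ^ (k - 1 + 2 * card (upper_idx k)))"
proof -
  have \<pi>: "0 \<le> \<pi> a" if "a \<in> {1..<k}" for a
    using Theta_weight_pos[OF th that] by simp
  have box_sets: "weight_box k n \<pi> \<in> sets (weights_space k)" "prob_box k n P \<in> sets (probs_space k)"
    unfolding weight_box_def prob_box_def prob_window_def by (auto intro!: sets_PiM_I_finite)
  have "(\<integral>\<^sup>+ q. ennreal c * indicator (weight_box k n \<pi>) p * indicator (prob_box k n P) q \<partial>probs_space k) =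
      ennreal c * emeasure (probs_space k) (prob_box k n P) * indicator (weight_box k n \<pi>) p" for p
    using nn_integral_cmult_indicator[OF box_sets(2), of "ennreal c * indicator (weight_box k n \<pi>) p"]
    by (simp add: mult_ac)
  then have "(\<integral>\<^sup>+ p. \<integral>\<^sup>+ q. ennreal c * indicator (weight_box k n \<pi>) p * indicator (prob_box k n P) q
      \<partial>probs_space k \<partial>weights_space k) =
      ennreal c * emeasure (probs_space k) (prob_box k n P) * emeasure (weights_space k) (weight_box k n \<pi>)"
    using nn_integral_cmult_indicator[OF box_sets(1)] by simp
  also have "\<dots> = ennreal (c * (1 / real n ^ 2) ^ card (upper_idx k) * ((\<Prod>a\<in>{1..<k}. \<pi> a) * (1 / real n) ^ (k - 1)))"
  proof -
    have "emeasure (weights_space k) (weight_box k n \<pi>) = ennreal ((\<Prod>a\<in>{1..<k}. \<pi> a) * (1 / real n) ^ (k - 1))"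
      using n \<pi> by (intro emeasure_weight_box) auto
    moreover have "0 \<le> (\<Prod>a\<in>{1..<k}. \<pi> a)" using \<pi> by (intro prod_nonneg) auto
    ultimately show ?thesis
      using c by (simp add: emeasure_prob_box ennreal_mult)
  qed
  also have "c * (1 / real n ^ 2) ^ card (upper_idx k) * ((\<Prod>a\<in>{1..<k}. \<pi> a) * (1 / real n) ^ (k - 1)) =
      c * (\<Prod>a\<in>{1..<k}. \<pi> a) * (1 / real n) ^ (k - 1 + 2 * card (upper_idx k))"
    unfolding power_add power_mult power_one_over by (simp add: mult_ac)
  finally show ?thesis .
qed

lemma KT_ge_sbm_marg:
  assumes k: "k \<ge> 1" and th: "(\<pi>, P) \<in> Theta k" and n: "n \<ge> 2" and u: "u \<in> graphs n"
  shows "KT_lower_const k * (\<Prod>a\<in>{1..<k}. \<pi> a) * (1 / real n) ^ (k - 1 + 2 * card (upper_idx k)) *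
      sbm_marg k \<pi> P n (graph_of u) \<le> KT k n (graph_of u)"
proof -
  define c where "c = KT_lower_const k * sbm_marg k \<pi> P n (graph_of u)"
  define Y where "Y = c * (\<Prod>a\<in>{1..<k}. \<pi> a) * (1 / real n) ^ (k - 1 + 2 * card (upper_idx k))"
  have c: "c \<ge> 0" unfolding c_def using KT_lower_const_pos[OF k] sbm_marg_nonneg[OF th] by simp
  have "0 \<le> (\<Prod>a\<in>{1..<k}. \<pi> a)"
    using Theta_weight_pos[OF th] by (intro prod_nonneg) (simp add: less_imp_le)
  then have "Y = enn2real (ennreal Y)" using c by (simp add: Y_def)
  also have "\<dots> \<le> enn2real (KT_integral k n (graph_of u))"
  proof (rule enn2real_mono)
    show "ennreal Y \<le> KT_integral k n (graph_of u)"
      unfolding Y_def nn_integral_boxes[OF _ th c, symmetric, OF order.trans[OF one_le_numeral n]]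
      unfolding KT_integral_def c_def by (intro nn_integral_mono KT_integrand_box_ge[OF k th n])
  qed (rule KT_integral_less_top[OF k u])
  finally show ?thesis by (simp add: KT_eq_KT_integral Y_def c_def mult_ac)
qed

lemma KT_pos:
  assumes k: "k \<ge> 1" and n: "n \<ge> 2" and u: "u \<in> graphs n"
  shows "KT k n (graph_of u) > 0"
proof -
  define \<pi> where "\<pi> = (\<lambda>a::nat. 1 / real k)"
  define P where "P = (\<lambda>(a::nat) (b::nat). 1/2 :: real)"
  define z where "z = (\<lambda>i. if i < n then (1::nat) else undefined)"
  have th: "(\<pi>, P) \<in> Theta k" using k by (auto simp: Theta_def \<pi>_def P_def)
  have z: "z \<in> labelings k n" using k by (auto simp: labelings_def z_def PiE_def extensional_def)
  have "sbm_joint k \<pi> P n z (graph_of u) > 0"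
    unfolding sbm_joint_def using k by (intro mult_pos_pos prod_pos) (auto simp: \<pi>_def P_def pow0_def)
  then have "sbm_marg k \<pi> P n (graph_of u) > 0"
    unfolding sbm_marg_def using z sbm_joint_nonneg[OF th] by (intro sum_pos2[where i = z]) auto
  then have "0 < KT_lower_const k * (\<Prod>a\<in>{1..<k}. \<pi> a) * (1 / real n) ^ (k - 1 + 2 * card (upper_idx k)) *
      sbm_marg k \<pi> P n (graph_of u)"
    using KT_lower_const_pos[OF k] n k by (intro mult_pos_pos prod_pos) (auto simp: \<pi>_def)
  also have "\<dots> \<le> KT k n (graph_of u)" by (rule KT_ge_sbm_marg[OF k th n u])
  finally show ?thesis .
qed

lemma ln_KT_ge:
  assumes k: "k \<ge> 1" and th: "(\<pi>, P) \<in> Theta k" and n: "n \<ge> 2" and u: "u \<in> graphs n"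
    and m: "sbm_marg k \<pi> P n (graph_of u) > 0"
  shows "ln (KT_lower_const k * (\<Prod>a\<in>{1..<k}. \<pi> a)) - real (k - 1 + 2 * card (upper_idx k)) * ln (real n) +
      ln (sbm_marg k \<pi> P n (graph_of u)) \<le> ln (KT k n (graph_of u))"
proof -
  define c where "c = KT_lower_const k * (\<Prod>a\<in>{1..<k}. \<pi> a)"
  have "0 < (\<Prod>a\<in>{1..<k}. \<pi> a)" using Theta_weight_pos[OF th] by (rule prod_pos)
  then have c: "c > 0" unfolding c_def using KT_lower_const_pos[OF k] by simp
  then have "ln c - real (k - 1 + 2 * card (upper_idx k)) * ln (real n) + ln (sbm_marg k \<pi> P n (graph_of u)) =
      ln (c * (1 / real n) ^ (k - 1 + 2 * card (upper_idx k)) * sbm_marg k \<pi> P n (graph_of u))"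
    using m n by (simp add: ln_mult ln_realpow ln_div)
  also have "\<dots> \<le> ln (KT k n (graph_of u))"
    using KT_ge_sbm_marg[OF k th n u] c m n by (intro ln_mono) (auto simp: c_def)
  finally show ?thesis by (simp add: c_def)
qed

section \<open>Penalty versus likelihood\<close>

lemma Gamma_half_of_nat_le: "k \<ge> 1 \<Longrightarrow> Gamma (real k / 2) \<le> 2 * real k ^ k"
proof (induction k rule: less_induct)
  case (less k)
  show ?case
  proof (cases "k \<le> 2")
    case True
    then have "k = 1 \<or> k = 2" using less.prems by auto
    moreover have "sqrt pi \<le> 2"
      using real_sqrt_le_mono[of pi 4] pi_less_4 by simp
    ultimately show ?thesis by (auto simp: Gamma_one_half_real)
  next
    case False
    define j where "j = k - 2"
    have j: "j \<ge> 1" "k = j + 2" using False by (auto simp: j_def)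
    have "Gamma (real k / 2) = real j / 2 * Gamma (real j / 2)"
      using j Gamma_plus1[of "real j / 2"] by (simp add: field_simps nonpos_Ints_def)
    also have "\<dots> \<le> real j / 2 * (2 * real j ^ j)"
      using less.IH[of j] j by (intro mult_left_mono) auto
    also have "\<dots> = real j ^ (j + 1)" by simp
    also have "\<dots> \<le> real k ^ k"
      using j by (intro order.trans[OF power_mono power_increasing]) auto
    finally show ?thesis using zero_le_power[of "real k" k] by linarith
  qed
qed

lemma dirichlet_const_le: "k \<ge> 1 \<Longrightarrow> dirichlet_const k \<le> 2 * real k ^ k"
proof -
  assume k: "k \<ge> 1"
  have "1 \<le> Gamma (1/2 :: real) ^ k"
    using pi_gt3 by (intro one_le_power) (simp add: Gamma_one_half_real)
  then have "Gamma (real k / 2) \<le> Gamma (real k / 2) * Gamma (1/2 :: real) ^ k"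
    using mult_left_mono[of 1 "Gamma (1/2::real) ^ k" "Gamma (real k / 2)"] Gamma_half_of_nat_nonneg[of k]
    by simp
  then have "dirichlet_const k \<le> Gamma (real k / 2)"
    unfolding dirichlet_const_def by (simp add: divide_le_eq Gamma_one_half_real)
  also have "\<dots> \<le> 2 * real k ^ k" by (rule Gamma_half_of_nat_le[OF k])
  finally show ?thesis .
qed

lemma prior_mass_bound_le_exp: "k \<ge> 1 \<Longrightarrow> prior_mass_bound k \<le> exp (3 + 2 * real k ^ 2)"
proof (cases "k = 1")
  case True
  then show ?thesis by (simp add: prior_mass_bound_def order_trans[OF _ exp_ge_add_one_self])
next
  case False
  assume k: "k \<ge> 1"
  have pi_pow: "pi * 2 ^ (k - 2) \<le> (2::real) ^ k"
  proof -
    have "k = (k - 2) + 2" using k False by simp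
    then have "(2::real) ^ k = 2 ^ (k - 2) * 2 ^ 2" by (metis power_add)
    then show ?thesis using pi_less_4 by simp
  qed
  have "(2 * real k) ^ k = exp (real k * ln (2 * real k))"
    using k by (simp add: exp_of_nat_mult)
  also have "real k * ln (2 * real k) \<le> real k * (2 * real k - 1)"
    using k ln_le_minus_one[of "2 * real k"] by (intro mult_left_mono) auto
  then have "exp (real k * ln (2 * real k)) \<le> exp (2 * real k ^ 2)"
    by (simp add: power2_eq_square algebra_simps)
  finally have pow: "(2 * real k) ^ k \<le> exp (2 * real k ^ 2)" .
  have "prior_mass_bound k = dirichlet_const k * (pi * 2 ^ (k - 2))"
    using False by (simp add: prior_mass_bound_def)
  also have "\<dots> \<le> (2 * real k ^ k) * 2 ^ k"
    using dirichlet_const_le[OF k] pi_pow by (intro mult_mono) auto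
  also have "\<dots> = 2 * (2 * real k) ^ k" by (simp add: power_mult_distrib)
  also have "\<dots> \<le> exp 3 * exp (2 * real k ^ 2)"
    using pow exp_ge_add_one_self[of 3] by (intro mult_mono) auto
  finally show ?thesis by (simp add: exp_add)
qed

lemma ln_prior_mass_bound_le: "k \<ge> 1 \<Longrightarrow> ln (prior_mass_bound k) \<le> 3 + 2 * real k ^ 2"
  using ln_mono[OF prior_mass_bound_le_exp prior_mass_bound_pos] by simp

lemma ln_KT_le:
  assumes "k \<ge> 1" "u \<in> graphs n"
  shows "ln (KT k n (graph_of u)) \<le> 3 + 2 * real k ^ 2"
proof (cases "KT k n (graph_of u) = 0")
  case False
  then have "KT k n (graph_of u) > 0" using KT_nonneg[of k n "graph_of u"] by simp
  moreover have "KT k n (graph_of u) \<le> exp (3 + 2 * real k ^ 2)"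
    using KT_le_prior_mass_bound[OF assms] prior_mass_bound_le_exp[OF assms(1)] by simp
  ultimately have "ln (KT k n (graph_of u)) \<le> ln (exp (3 + 2 * real k ^ 2))" by (intro ln_mono) auto
  then show ?thesis by simp
qed simp

lemma pen_one: "pen \<epsilon> 1 n = 0"
  by (simp add: pen_def)

lemma pen_diff_ge:
  assumes "\<epsilon> > 0" "k0 \<ge> 1" "k0 < k"
  shows "pen \<epsilon> k n - pen \<epsilon> k0 n \<ge> real k ^ 2 / 2 * ln (real n)"
proof (cases "n = 0")
  case False
  define f where "f i = (real (i * (i + 2)) + 3 + \<epsilon>) / 2 * ln (real n)" for i
  have f_nonneg: "f i \<ge> 0" for i unfolding f_def using assms False by simp
  have "pen \<epsilon> k n = (\<Sum>i=1..<k0. f i) + (\<Sum>i=k0..<k. f i)"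
    unfolding pen_def f_def using assms by (subst sum.atLeastLessThan_concat) auto
  then have "pen \<epsilon> k n - pen \<epsilon> k0 n = (\<Sum>i=k0..<k. f i)"
    by (simp add: pen_def f_def)
  moreover have "f (k - 1) \<le> (\<Sum>i=k0..<k. f i)" using assms f_nonneg by (intro member_le_sum) auto
  moreover have "real ((k - 1) * (k - 1 + 2)) = real k ^ 2 - 1"
    using assms by (simp add: of_nat_diff power2_eq_square algebra_simps)
  then have "real k ^ 2 / 2 * ln (real n) \<le> f (k - 1)"
    unfolding f_def using assms False by (intro mult_right_mono) auto
  ultimately show ?thesis by linarith
qed (simp add: pen_def)


definition atypical_graphs ::
    "nat \<Rightarrow> (nat \<Rightarrow> real) \<Rightarrow> (nat \<Rightarrow> nat \<Rightarrow> real) \<Rightarrow> nat \<Rightarrow> (nat \<times> nat \<Rightarrow> bool) set" where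
  "atypical_graphs k0 \<pi>0 P0 n = {u \<in> graphs n. sbm_marg k0 \<pi>0 P0 n (graph_of u) = 0 \<or>
     (\<exists>k\<in>{1..n}. real n ^ 3 * prior_mass_bound k * sbm_marg k0 \<pi>0 P0 n (graph_of u) < KT k n (graph_of u))}"

lemma sum_markov_inequality:
  fixes f g :: "'a \<Rightarrow> real"
  assumes "finite S" "c > 0" "\<And>u. u \<in> S \<Longrightarrow> 0 \<le> f u"
  shows "(\<Sum>u\<in>{u \<in> S. c * g u < f u}. g u) \<le> (\<Sum>u\<in>S. f u) / c"
proof -
  have "(\<Sum>u\<in>{u \<in> S. c * g u < f u}. g u) \<le> (\<Sum>u\<in>{u \<in> S. c * g u < f u}. f u / c)"
    using assms(2) by (intro sum_mono) (simp add: field_simps)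
  also have "\<dots> \<le> (\<Sum>u\<in>S. f u / c)"
    using assms by (intro sum_mono2) auto
  finally show ?thesis by (simp add: sum_divide_distrib)
qed

lemma sum_sbm_marg_beaten_le:
  assumes k: "k \<ge> 1" and n: "n \<ge> 1"
  shows "(\<Sum>u\<in>{u \<in> graphs n. real n ^ 3 * prior_mass_bound k * sbm_marg k0 \<pi>0 P0 n (graph_of u) <
      KT k n (graph_of u)}. sbm_marg k0 \<pi>0 P0 n (graph_of u)) \<le> 1 / real n ^ 3"
proof -
  have c: "real n ^ 3 * prior_mass_bound k > 0" using n prior_mass_bound_pos[OF k] by simp
  have "(\<Sum>u\<in>{u \<in> graphs n. real n ^ 3 * prior_mass_bound k * sbm_marg k0 \<pi>0 P0 n (graph_of u) <
      KT k n (graph_of u)}. sbm_marg k0 \<pi>0 P0 n (graph_of u)) \<le>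
      (\<Sum>u\<in>graphs n. KT k n (graph_of u)) / (real n ^ 3 * prior_mass_bound k)"
    by (rule sum_markov_inequality[OF finite_graphs c KT_nonneg])
  also have "\<dots> \<le> prior_mass_bound k / (real n ^ 3 * prior_mass_bound k)"
    using sum_KT_le_prior_mass_bound[OF k] c by (intro divide_right_mono) auto
  finally show ?thesis using prior_mass_bound_pos[OF k] by simp
qed

lemma sum_sbm_marg_atypical_le:
  assumes th: "(\<pi>0, P0) \<in> Theta k0" and n: "n \<ge> 1"
  shows "(\<Sum>u\<in>atypical_graphs k0 \<pi>0 P0 n. sbm_marg k0 \<pi>0 P0 n (graph_of u)) \<le> 1 / real n ^ 2"
proof -
  define m0 where "m0 u = sbm_marg k0 \<pi>0 P0 n (graph_of u)" for u
  define beats where "beats k u \<longleftrightarrow> real n ^ 3 * prior_mass_bound k * m0 u < KT k n (graph_of u)" for k u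
  have m0: "m0 u \<ge> 0" for u unfolding m0_def by (rule sbm_marg_nonneg[OF th])
  have "(\<Sum>u\<in>atypical_graphs k0 \<pi>0 P0 n. m0 u) \<le>
      (\<Sum>u\<in>graphs n. \<Sum>k\<in>{1..n}. if beats k u then m0 u else 0)"
  proof (rule sum_mono2[OF finite_graphs, THEN order_trans[rotated]])
    show "(\<Sum>u\<in>atypical_graphs k0 \<pi>0 P0 n. m0 u) \<le>
        (\<Sum>u\<in>atypical_graphs k0 \<pi>0 P0 n. \<Sum>k\<in>{1..n}. if beats k u then m0 u else 0)"
    proof (rule sum_mono)
      fix u assume "u \<in> atypical_graphs k0 \<pi>0 P0 n"
      then consider "m0 u = 0" | k where "k \<in> {1..n}" "beats k u"
        by (auto simp: atypical_graphs_def m0_def beats_def)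
      then show "m0 u \<le> (\<Sum>k\<in>{1..n}. if beats k u then m0 u else 0)"
      proof cases
        case (2 k)
        then have "(if beats k u then m0 u else 0) \<le> (\<Sum>k\<in>{1..n}. if beats k u then m0 u else 0)"
          using m0 by (intro member_le_sum) auto
        then show ?thesis using 2 by simp
      qed (use m0 in \<open>auto intro: sum_nonneg\<close>)
    qed
  qed (auto simp: atypical_graphs_def m0 intro: sum_nonneg)
  also have "\<dots> = (\<Sum>k\<in>{1..n}. \<Sum>u\<in>{u \<in> graphs n. beats k u}. m0 u)"
    by (simp add: sum.swap[of _ "graphs n"] sum.inter_filter)
  also have "\<dots> \<le> (\<Sum>k\<in>{1..n}. 1 / real n ^ 3)"
    unfolding beats_def m0_def using n by (intro sum_mono sum_sbm_marg_beaten_le) auto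
  also have "\<dots> = 1 / real n ^ 2"
    using n by (simp add: power3_eq_cube power2_eq_square)
  finally show ?thesis by (simp add: m0_def)
qed

lemma ex_maximiser_nat:
  fixes f :: "nat \<Rightarrow> 'a::linorder"
  assumes "\<And>k. K < k \<Longrightarrow> f k \<le> f 1"
  shows "\<exists>m\<ge>1. \<forall>k\<ge>1. f k \<le> f m"
proof -
  define S where "S = {1..max 1 K}"
  have S: "finite S" "1 \<in> S" by (auto simp: S_def)
  obtain m where m: "m \<in> S" "f m = Max (f ` S)"
    using Max_in[of "f ` S"] S by fastforce
  have "f k \<le> f m" if "k \<ge> 1" for k
  proof (cases "k \<in> S")
    case True
    then show ?thesis using m S by simp
  next
    case False
    then have "f k \<le> f 1" using assms that by (auto simp: S_def)
    also have "f 1 \<le> f m" using m S by simp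
    finally show ?thesis .
  qed
  then show ?thesis using m by (auto simp: S_def)
qed

lemma k_KT_maximises:
  assumes "\<exists>m\<ge>1. \<forall>k\<ge>1. kt_score \<epsilon> n x k \<le> kt_score \<epsilon> n x m"
  shows "k_KT \<epsilon> n x \<ge> 1" and "\<And>k. k \<ge> 1 \<Longrightarrow> kt_score \<epsilon> n x k \<le> kt_score \<epsilon> n x (k_KT \<epsilon> n x)"
  using LeastI_ex[OF assms] unfolding k_KT_def by auto

lemma kt_score_le:
  assumes "k \<ge> 1" "u \<in> graphs n"
  shows "kt_score \<epsilon> n (graph_of u) k \<le> 3 + 2 * real k ^ 2 - pen \<epsilon> k n"
  using ln_KT_le[OF assms] by (simp add: kt_score_def)

lemma kt_score_has_maximiser:
  assumes \<epsilon>: "\<epsilon> > 0" and L: "8 \<le> ln (real n)" and u: "u \<in> graphs n"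
  shows "\<exists>m\<ge>1. \<forall>k\<ge>1. kt_score \<epsilon> n (graph_of u) k \<le> kt_score \<epsilon> n (graph_of u) m"
proof (rule ex_maximiser_nat[where K = "nat \<lceil>\<bar>3 - kt_score \<epsilon> n (graph_of u) 1\<bar>\<rceil> + 1"])
  fix k assume k: "nat \<lceil>\<bar>3 - kt_score \<epsilon> n (graph_of u) 1\<bar>\<rceil> + 1 < k"
  then have "real k ^ 2 / 2 * ln (real n) \<le> pen \<epsilon> k n - pen \<epsilon> 1 n"
    by (intro pen_diff_ge[OF \<epsilon>]) auto
  then have "real k ^ 2 / 2 * ln (real n) \<le> pen \<epsilon> k n"
    by (simp only: pen_one diff_zero)
  moreover have "real k ^ 2 * 8 \<le> real k ^ 2 * ln (real n)"
    using L by (intro mult_left_mono) auto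
  moreover have "real k \<le> real k ^ 2"
    using le_square[of k] by (metis of_nat_le_iff of_nat_mult power2_eq_square)
  moreover have "\<bar>3 - kt_score \<epsilon> n (graph_of u) 1\<bar> < real k" using k by linarith
  ultimately show "kt_score \<epsilon> n (graph_of u) k \<le> kt_score \<epsilon> n (graph_of u) 1"
    using kt_score_le[OF _ u, of k \<epsilon>] k by linarith
qed

text \<open>Beyond this threshold the penalty gap \<open>k\<^sup>2 ln n / 2\<close> between an order \<open>k > ln n\<close>
  and \<open>k0\<close> beats the \<open>O(k\<^sup>2 + ln n)\<close> gain in likelihood on typical graphs.\<close>

definition order_gap_threshold :: "nat \<Rightarrow> (nat \<Rightarrow> real) \<Rightarrow> real" where
  "order_gap_threshold k0 \<pi>0 = max 8 (max (real k0 + 1)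
     (max (8 * (3 + real (k0 - 1 + 2 * card (upper_idx k0))) + 1)
          (4 - ln (KT_lower_const k0 * (\<Prod>a\<in>{1..<k0}. \<pi>0 a)))))"

lemma kt_score_gap:
  assumes \<epsilon>: "\<epsilon> > 0" and k0: "k0 \<ge> 1" and th: "(\<pi>0, P0) \<in> Theta k0"
    and L: "order_gap_threshold k0 \<pi>0 \<le> ln (real n)" and u: "u \<in> graphs n"
    and m0: "sbm_marg k0 \<pi>0 P0 n (graph_of u) > 0"
    and k: "ln (real n) < real k"
      "KT k n (graph_of u) \<le> real n ^ 3 * prior_mass_bound k * sbm_marg k0 \<pi>0 P0 n (graph_of u)"
  shows "kt_score \<epsilon> n (graph_of u) k < kt_score \<epsilon> n (graph_of u) k0"
proof -
  define m where "m = sbm_marg k0 \<pi>0 P0 n (graph_of u)"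
  define D where "D = real (k0 - 1 + 2 * card (upper_idx k0))"
  define c where "c = KT_lower_const k0 * (\<Prod>a\<in>{1..<k0}. \<pi>0 a)"
  define l where "l = ln (real n)"
  have l: "8 \<le> l" "real k0 + 1 \<le> l" "8 * (3 + D) + 1 \<le> l" "4 - ln c \<le> l"
    using L unfolding order_gap_threshold_def max.bounded_iff l_def D_def c_def by auto
  have n: "n \<ge> 2"
  proof (rule ccontr)
    assume "\<not> n \<ge> 2"
    then have "n = 0 \<or> n = 1" by auto
    then show False using l(1) by (auto simp: l_def)
  qed
  have k_ge: "k \<ge> 1" "k0 < k" using k(1) l(2) unfolding l_def by linarith+
  have "ln (KT k n (graph_of u)) \<le> ln (real n ^ 3 * prior_mass_bound k * m)"
    using k(2) KT_pos[OF k_ge(1) n u] by (intro ln_mono) (auto simp: m_def)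
  also have "\<dots> = 3 * l + ln (prior_mass_bound k) + ln m"
    using n prior_mass_bound_pos[OF k_ge(1)] m0 by (simp add: ln_mult ln_realpow l_def m_def)
  also have "\<dots> \<le> 3 * l + (3 + 2 * real k ^ 2) + ln m"
    using ln_prior_mass_bound_le[OF k_ge(1)] by simp
  finally have upper: "ln (KT k n (graph_of u)) \<le> 3 * l + (3 + 2 * real k ^ 2) + ln m" .
  have lower: "ln c - D * l + ln m \<le> ln (KT k0 n (graph_of u))"
    using ln_KT_ge[OF k0 th n u m0] by (simp add: c_def D_def l_def m_def)
  have pen: "real k ^ 2 / 2 * l \<le> pen \<epsilon> k n - pen \<epsilon> k0 n"
    using pen_diff_ge[OF \<epsilon> k0 k_ge(2)] by (simp add: l_def)
  define K2 where "K2 = real k ^ 2"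
  have "l ^ 2 \<le> K2" unfolding K2_def using k(1) l(1) by (intro power_mono) (auto simp: l_def)
  moreover have "l \<le> l ^ 2" using l(1) by (simp add: power2_eq_square)
  ultimately have "K2 * 8 \<le> K2 * l" "(3 + D) * 8 < K2" "3 - ln c < K2"
    using l by (auto intro: mult_left_mono)
  then have "3 * l + (3 + 2 * K2) - (ln c - D * l) - K2 * l / 2 < 0"
    using l(1) mult_strict_right_mono[of "(3 + D) * 8" K2 l] by (simp add: algebra_simps)
  then show ?thesis
    using upper lower pen by (simp add: kt_score_def K2_def)
qed

lemma k_KT_not_large:
  assumes \<epsilon>: "\<epsilon> > 0" and k0: "k0 \<ge> 1" and th: "(\<pi>0, P0) \<in> Theta k0"
    and L: "order_gap_threshold k0 \<pi>0 \<le> ln (real n)"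
    and u: "u \<in> graphs n" "u \<notin> atypical_graphs k0 \<pi>0 P0 n"
  shows "\<not> (ln (real n) < real (k_KT \<epsilon> n (graph_of u)) \<and> k_KT \<epsilon> n (graph_of u) \<le> n)"
proof
  let ?k = "k_KT \<epsilon> n (graph_of u)"
  assume large: "ln (real n) < real ?k \<and> ?k \<le> n"
  have "8 \<le> ln (real n)" using L by (simp add: order_gap_threshold_def)
  note max = k_KT_maximises[OF kt_score_has_maximiser[OF \<epsilon> this u(1)]]
  have "sbm_marg k0 \<pi>0 P0 n (graph_of u) > 0"
    using u sbm_marg_nonneg[OF th, of n "graph_of u"] by (auto simp: atypical_graphs_def)
  moreover have "KT ?k n (graph_of u) \<le> real n ^ 3 * prior_mass_bound ?k * sbm_marg k0 \<pi>0 P0 n (graph_of u)"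
    using u large max(1) by (auto simp: atypical_graphs_def not_less)
  ultimately have "kt_score \<epsilon> n (graph_of u) ?k < kt_score \<epsilon> n (graph_of u) k0"
    using large by (intro kt_score_gap[OF \<epsilon> k0 th L u(1)]) auto
  then show False using max(2)[OF k0] by simp
qed

section \<open>Sampling from the model\<close>

locale sbm_sample = prob_space M
  for M :: "'w measure" and Z :: "'w \<Rightarrow> nat \<Rightarrow> nat" and X :: "'w \<Rightarrow> nat \<Rightarrow> nat \<Rightarrow> bool"
    and k0 :: nat and \<pi>0 :: "nat \<Rightarrow> real" and P0 :: "nat \<Rightarrow> nat \<Rightarrow> real" +
  assumes params: "(\<pi>0, P0) \<in> Theta k0"
    and Z_measurable: "\<And>i. (\<lambda>\<omega>. Z \<omega> i) \<in> measurable M (count_space UNIV)"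
    and X_measurable: "\<And>i j. (\<lambda>\<omega>. X \<omega> i j) \<in> measurable M (count_space UNIV)"
    and joint_law: "\<And>n z x. z \<in> labelings k0 n \<Longrightarrow> adj_matrix n x \<Longrightarrow>
      measure M {\<omega> \<in> space M. (\<forall>i<n. Z \<omega> i = z i) \<and> (\<forall>i<n. \<forall>j<n. X \<omega> i j = x i j)} =
      sbm_joint k0 \<pi>0 P0 n z x"
begin

definition sample_event :: "nat \<Rightarrow> (nat \<Rightarrow> nat) \<Rightarrow> (nat \<times> nat \<Rightarrow> bool) \<Rightarrow> 'w set" where
  "sample_event n z u = {\<omega> \<in> space M. (\<forall>i<n. Z \<omega> i = z i) \<and> (\<forall>i<n. \<forall>j<n. X \<omega> i j = graph_of u i j)}"

definition graph_event :: "nat \<Rightarrow> (nat \<times> nat \<Rightarrow> bool) \<Rightarrow> 'w set" where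
  "graph_event n u = {\<omega> \<in> space M. \<forall>i<n. \<forall>j<n. X \<omega> i j = graph_of u i j}"

lemma sample_event_sets [measurable]: "sample_event n z u \<in> events"
proof -
  note Z_measurable [measurable] X_measurable [measurable]
  show ?thesis unfolding sample_event_def by measurable
qed

lemma graph_event_sets [measurable]: "graph_event n u \<in> events"
proof -
  note X_measurable [measurable]
  show ?thesis unfolding graph_event_def by measurable
qed

lemma disjoint_sample_events:
  "disjoint_family_on (\<lambda>p. sample_event n (fst p) (snd p)) (labelings k0 n \<times> graphs n)"
  unfolding disjoint_family_on_def
proof (intro ballI impI)
  fix p q assume p: "p \<in> labelings k0 n \<times> graphs n" and q: "q \<in> labelings k0 n \<times> graphs n" and "p \<noteq> q"
  show "sample_event n (fst p) (snd p) \<inter> sample_event n (fst q) (snd q) = {}"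
  proof (rule ccontr)
    assume "sample_event n (fst p) (snd p) \<inter> sample_event n (fst q) (snd q) \<noteq> {}"
    then obtain \<omega> where "\<omega> \<in> sample_event n (fst p) (snd p)" "\<omega> \<in> sample_event n (fst q) (snd q)" by blast
    then have agree: "\<forall>i<n. fst p i = fst q i" "\<forall>i<n. \<forall>j<n. graph_of (snd p) i j = graph_of (snd q) i j"
      by (auto simp: sample_event_def)
    have "fst p = fst q"
      using p q agree(1) unfolding labelings_def by (intro PiE_ext[of _ "{0..<n}"]) auto
    moreover have "snd p = snd q"
      using p q agree(2) by (intro graph_of_inj[of _ n]) auto
    ultimately show False using \<open>p \<noteq> q\<close> by (simp add: prod_eq_iff)
  qed
qed

lemma measure_sample_event:
  "z \<in> labelings k0 n \<Longrightarrow> measure M (sample_event n z u) = sbm_joint k0 \<pi>0 P0 n z (graph_of u)"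
  unfolding sample_event_def by (rule joint_law) (auto simp: adj_matrix_graph_of)

lemma measure_sample_events:
  assumes "S \<subseteq> graphs n"
  shows "measure M (\<Union>p\<in>labelings k0 n \<times> S. sample_event n (fst p) (snd p)) =
    (\<Sum>u\<in>S. sbm_marg k0 \<pi>0 P0 n (graph_of u))"
proof -
  have "finite (labelings k0 n \<times> S)"
    using assms finite_subset by fastforce
  moreover have "disjoint_family_on (\<lambda>p. sample_event n (fst p) (snd p)) (labelings k0 n \<times> S)"
    by (rule disjoint_family_on_mono[OF _ disjoint_sample_events]) (use assms in auto)
  ultimately have "measure M (\<Union>p\<in>labelings k0 n \<times> S. sample_event n (fst p) (snd p)) =
      (\<Sum>p\<in>labelings k0 n \<times> S. measure M (sample_event n (fst p) (snd p)))"
    by (intro finite_measure_finite_Union) auto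
  also have "\<dots> = (\<Sum>p\<in>labelings k0 n \<times> S. sbm_joint k0 \<pi>0 P0 n (fst p) (graph_of (snd p)))"
    by (rule sum.cong[OF refl]) (auto simp: measure_sample_event)
  also have "\<dots> = (\<Sum>z\<in>labelings k0 n. \<Sum>u\<in>S. sbm_joint k0 \<pi>0 P0 n z (graph_of u))"
    by (simp add: sum.cartesian_product case_prod_beta)
  also have "\<dots> = (\<Sum>u\<in>S. sbm_marg k0 \<pi>0 P0 n (graph_of u))"
    unfolding sbm_marg_def by (rule sum.swap)
  finally show ?thesis .
qed

lemma AE_sampled: "AE \<omega> in M. \<omega> \<in> (\<Union>p\<in>labelings k0 n \<times> graphs n. sample_event n (fst p) (snd p))"
  by (intro AE_prob_1)
     (simp add: measure_sample_events sum_sbm_marg_graphs[OF params] del: Union_iff)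

lemma AE_adj_matrix: "AE \<omega> in M. \<forall>n. adj_matrix n (X \<omega>)"
  unfolding AE_all_countable
proof
  fix n
  show "AE \<omega> in M. adj_matrix n (X \<omega>)"
    using AE_sampled[of n] by eventually_elim (auto simp: sample_event_def adj_matrix_def graph_of_def)
qed

lemma measure_graph_event_le:
  assumes "u \<in> graphs n"
  shows "measure M (graph_event n u) \<le> sbm_marg k0 \<pi>0 P0 n (graph_of u)"
proof -
  let ?S = "\<Union>p\<in>labelings k0 n \<times> graphs n. sample_event n (fst p) (snd p)"
  let ?G = "\<Union>p\<in>labelings k0 n \<times> {u}. sample_event n (fst p) (snd p)"
  have G: "?G \<in> events" and S: "?S \<in> events" by (auto intro!: sets.finite_UN)
  have "graph_event n u \<subseteq> ?G \<union> (space M - ?S)"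
  proof
    fix \<omega> assume \<omega>: "\<omega> \<in> graph_event n u"
    show "\<omega> \<in> ?G \<union> (space M - ?S)"
    proof (cases "\<omega> \<in> ?S")
      case True
      then obtain z u' where zu': "z \<in> labelings k0 n" "u' \<in> graphs n" "\<omega> \<in> sample_event n z u'"
        by auto
      have "u' = u"
        using zu'(2) assms zu'(3) \<omega> by (intro graph_of_inj[of _ n]) (auto simp: graph_event_def sample_event_def)
      then show ?thesis using zu' by auto
    next
      case False
      then show ?thesis using \<omega> by (auto simp: graph_event_def)
    qed
  qed
  then have "measure M (graph_event n u) \<le> measure M ?G + measure M (space M - ?S)"
    using G S by (intro order.trans[OF finite_measure_mono measure_Un_le]) auto
  also have "measure M (space M - ?S) = 0"
    using prob_compl[OF S] by (simp add: measure_sample_events sum_sbm_marg_graphs[OF params] del: Union_iff)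
  finally show ?thesis using assms by (simp add: measure_sample_events)
qed

lemma AE_eventually_typical:
  "AE \<omega> in M. \<forall>\<^sub>F n in sequentially. edges_of n (X \<omega>) \<notin> atypical_graphs k0 \<pi>0 P0 n"
proof -
  define B where "B n = (\<Union>u\<in>atypical_graphs k0 \<pi>0 P0 n. graph_event n u)" for n
  have fin: "finite (atypical_graphs k0 \<pi>0 P0 n)" for n
    by (rule finite_subset[OF _ finite_graphs]) (auto simp: atypical_graphs_def)
  have B: "B n \<in> events" for n unfolding B_def using fin by auto
  have "measure M (B n) \<le> 1 / real n ^ 2" if "n \<ge> 1" for n
  proof -
    have "measure M (B n) \<le> (\<Sum>u\<in>atypical_graphs k0 \<pi>0 P0 n. measure M (graph_event n u))"
      unfolding B_def using fin by (rule measure_UNION_le) auto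
    also have "\<dots> \<le> (\<Sum>u\<in>atypical_graphs k0 \<pi>0 P0 n. sbm_marg k0 \<pi>0 P0 n (graph_of u))"
      by (intro sum_mono measure_graph_event_le) (auto simp: atypical_graphs_def)
    also have "\<dots> \<le> 1 / real n ^ 2" by (rule sum_sbm_marg_atypical_le[OF params that])
    finally show ?thesis .
  qed
  then have "summable (\<lambda>n. measure M (B n))"
    by (intro summable_comparison_test'[OF inverse_power_summable[of 2], where N = 1])
       (auto simp: inverse_eq_divide)
  then have "AE \<omega> in M. \<forall>\<^sub>F n in sequentially. \<omega> \<in> space M - B n"
    using B by (intro borel_cantelli_AE1) (auto simp: less_top[symmetric])
  then show ?thesis
    using AE_adj_matrix
  proof eventually_elim
    case (elim \<omega>)
    from elim(1) show ?case
    proof eventually_elim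
      case (elim n)
      have "\<omega> \<in> graph_event n (edges_of n (X \<omega>))"
        using elim \<open>\<forall>n. adj_matrix n (X \<omega>)\<close> by (auto simp: graph_event_def graph_of_edges_of)
      then show ?case using elim by (auto simp: B_def)
    qed
  qed
qed

end

theorem lemma2:
  fixes M :: "'w measure" and Z :: "'w \<Rightarrow> nat \<Rightarrow> nat" and X :: "'w \<Rightarrow> nat \<Rightarrow> nat \<Rightarrow> bool"
    and k0 :: nat and \<pi>0 :: "nat \<Rightarrow> real" and P0 :: "nat \<Rightarrow> nat \<Rightarrow> real" and \<epsilon> :: real
  assumes "prob_space M"
    and "\<epsilon> > 0"
    and "k0 \<ge> 1"
    and "(\<pi>0, P0) \<in> Theta k0"
    and "sbm_order k0 \<pi>0 P0 = k0"
    and "\<And>i. (\<lambda>\<omega>. Z \<omega> i) \<in> measurable M (count_space UNIV)"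
    and "\<And>i j. (\<lambda>\<omega>. X \<omega> i j) \<in> measurable M (count_space UNIV)"
    and "\<And>n z x. z \<in> labelings k0 n \<Longrightarrow> adj_matrix n x \<Longrightarrow>
           measure M {\<omega> \<in> space M. (\<forall>i<n. Z \<omega> i = z i) \<and> (\<forall>i<n. \<forall>j<n. X \<omega> i j = x i j)}
             = sbm_joint k0 \<pi>0 P0 n z x"
  shows "AE \<omega> in M. eventually
           (\<lambda>n. \<not> (ln (real n) < real (k_KT \<epsilon> n (X \<omega>)) \<and> k_KT \<epsilon> n (X \<omega>) \<le> n)) sequentially"
proof -
  interpret sbm_sample M Z X k0 \<pi>0 P0
    using assms(1,4,6-8) by (intro sbm_sample.intro sbm_sample_axioms.intro) auto
  have threshold: "\<forall>\<^sub>F n in sequentially. order_gap_threshold k0 \<pi>0 \<le> ln (real n)"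
    using filterlim_compose[OF ln_at_top filterlim_real_sequentially] by (simp add: filterlim_at_top)
  show ?thesis
    using AE_eventually_typical AE_adj_matrix
  proof eventually_elim
    case (elim \<omega>)
    from elim(1) threshold show ?case
    proof eventually_elim
      case (elim n)
      have "k_KT \<epsilon> n (X \<omega>) = k_KT \<epsilon> n (graph_of (edges_of n (X \<omega>)))"
        using \<open>\<forall>n. adj_matrix n (X \<omega>)\<close> by (intro k_KT_cong) (simp add: graph_of_edges_of)
      then show ?case
        using k_KT_not_large[OF assms(2-4) elim(2) edges_of_in_graphs elim(1)] by simp
    qed
  qed
qed

end
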